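(* Let $\{\rho_\theta;\theta\in\Theta\}$ be a model as in the context, $g:\Theta\to\mathbb R$, and let $\theta,\theta+\delta\in\Theta$ with $\delta\neq0$, no element of $\Theta$ lying strictly between $\theta$ and $\theta+\delta$, and $g(\theta)\ne g(\theta+\delta)$. Let $(M_n)_{n\ge1}$ be a sequence of estimators, $M_n$ a POVM on $\mathcal H^{\otimes n}$, and suppose there is $n_0$ such that for all $n\ge n_0$ \[ \frac{|b(M_n,\theta)|}{|\delta|}\le\frac{|\Delta^1_\delta g(\theta)|}{3}\quad\text{and}\quad \frac{|b(M_n,\theta+\delta)|}{|\delta|}\le\frac{|\Delta^1_\delta g(\theta)|}{3}. \] Then \[ \liminf_{n\to\infty}\frac1n\log V_\theta(M_n)\ge-\log\big(1+\delta^2J^{R,1}_{\theta,\delta}\big), \] where $J^{R,1}_{\theta,\delta}=\mathrm{Tr}(\rho_\theta L^{R,1}_{\theta,\delta}(L^{R,1}_{\theta,\delta})^\dagger)$ with $L^{R,1}_{\theta,\delta}=\rho_\theta^{-1}(\rho_{\theta+\delta}-\rho_\theta)/\delta$.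
   Context: $\mathcal H$ is a finite-dimensional complex Hilbert space; $\Theta\subset\mathbb R$; $\rho_\theta$ are density operators on $\mathcal H$ with $\rho_\theta>0$. $\Delta^1_\delta f(\theta)=(f(\theta+\delta)-f(\theta))/\delta$. For an estimator $M_n$ (POVM on the Borel sets of $\mathbb R$ acting on $\mathcal H^{\otimes n}$), $b(M_n,\theta')=\int(\gamma-g(\theta'))\mathrm{Tr}(\rho_{\theta'}^{\otimes n}M_n(d\gamma))$ and $V_{\theta'}(M_n)=\int(\gamma-g(\theta'))^2\mathrm{Tr}(\rho_{\theta'}^{\otimes n}M_n(d\gamma))$. *)

theory Defs
  imports "HOL-Probability.Probability" "Jordan_Normal_Form.Schur_Decomposition"
begin

text \<open>Operators on the d-dimensional Hilbert space C^d are d x d complex matrices.\<close>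

definition mtrace :: "complex mat \<Rightarrow> complex" where
  "mtrace A = (\<Sum>i<dim_row A. A $$ (i, i))"

definition qform :: "complex mat \<Rightarrow> complex vec \<Rightarrow> complex" where
  "qform A v = scalar_prod (conjugate v) (mult_mat_vec A v)"

definition psd_op :: "nat \<Rightarrow> complex mat \<Rightarrow> bool" where
  "psd_op n A \<longleftrightarrow> A \<in> carrier_mat n n \<and>
     (\<forall>v \<in> carrier_vec n. Im (qform A v) = 0 \<and> Re (qform A v) \<ge> 0)"

definition pd_op :: "nat \<Rightarrow> complex mat \<Rightarrow> bool" where
  "pd_op n A \<longleftrightarrow> psd_op n A \<and>
     (\<forall>v \<in> carrier_vec n. v \<noteq> 0\<^sub>v n \<longrightarrow> Re (qform A v) > 0)"

definition density_op :: "nat \<Rightarrow> complex mat \<Rightarrow> bool" where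
  "density_op n \<rho> \<longleftrightarrow> psd_op n \<rho> \<and> mtrace \<rho> = 1"

definition minv :: "complex mat \<Rightarrow> complex mat" where
  "minv A = (SOME B. B \<in> carrier_mat (dim_row A) (dim_row A) \<and>
                 A * B = 1\<^sub>m (dim_row A) \<and> B * A = 1\<^sub>m (dim_row A))"

definition kron :: "complex mat \<Rightarrow> complex mat \<Rightarrow> complex mat" where
  "kron A B = mat (dim_row A * dim_row B) (dim_col A * dim_col B)
     (\<lambda>(i, j). A $$ (i div dim_row B, j div dim_col B) * B $$ (i mod dim_row B, j mod dim_col B))"

fun tensor_pow :: "complex mat \<Rightarrow> nat \<Rightarrow> complex mat" where
  "tensor_pow A 0 = 1\<^sub>m 1"
| "tensor_pow A (Suc n) = kron (tensor_pow A n) A"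

text \<open>POVM on the Borel sets of the real line acting on C^N
  (countable additivity in the (finite-dimensional) entrywise topology).\<close>
definition is_povm :: "nat \<Rightarrow> (real set \<Rightarrow> complex mat) \<Rightarrow> bool" where
  "is_povm N M \<longleftrightarrow>
     (\<forall>A \<in> sets borel. psd_op N (M A)) \<and>
     M UNIV = 1\<^sub>m N \<and>
     (\<forall>F :: nat \<Rightarrow> real set. range F \<subseteq> sets borel \<longrightarrow> disjoint_family F \<longrightarrow>
        (\<forall>i < N. \<forall>j < N. (\<lambda>n. (\<Sum>k<n. M (F k) $$ (i, j))) \<longlonglongrightarrow> M (\<Union>k. F k) $$ (i, j)))"

definition outcome_dist :: "complex mat \<Rightarrow> (real set \<Rightarrow> complex mat) \<Rightarrow> real measure" where
  "outcome_dist \<sigma> M = measure_of UNIV (sets borel) (\<lambda>A. ennreal (Re (mtrace (\<sigma> * M A))))"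

definition bias :: "(real \<Rightarrow> complex mat) \<Rightarrow> (real \<Rightarrow> real) \<Rightarrow> nat \<Rightarrow> (real set \<Rightarrow> complex mat) \<Rightarrow> real \<Rightarrow> real" where
  "bias \<rho> g n M \<theta>' = (\<integral>\<gamma>. (\<gamma> - g \<theta>') \<partial>(outcome_dist (tensor_pow (\<rho> \<theta>') n) M))"

definition mse :: "(real \<Rightarrow> complex mat) \<Rightarrow> (real \<Rightarrow> real) \<Rightarrow> nat \<Rightarrow> (real set \<Rightarrow> complex mat) \<Rightarrow> real \<Rightarrow> ennreal" where
  "mse \<rho> g n M \<theta>' = (\<integral>\<^sup>+\<gamma>. ennreal ((\<gamma> - g \<theta>')\<^sup>2) \<partial>(outcome_dist (tensor_pow (\<rho> \<theta>') n) M))"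

definition ln_ennreal :: "ennreal \<Rightarrow> ereal" where
  "ln_ennreal x = (if x = 0 then -\<infinity> else if x = \<top> then \<infinity> else ereal (ln (enn2real x)))"

definition diff1 :: "(real \<Rightarrow> real) \<Rightarrow> real \<Rightarrow> real \<Rightarrow> real" where
  "diff1 f \<delta> \<theta> = (f (\<theta> + \<delta>) - f \<theta>) / \<delta>"

definition LR1 :: "(real \<Rightarrow> complex mat) \<Rightarrow> real \<Rightarrow> real \<Rightarrow> complex mat" where
  "LR1 \<rho> \<theta> \<delta> = (complex_of_real (1 / \<delta>)) \<cdot>\<^sub>m (minv (\<rho> \<theta>) * (\<rho> (\<theta> + \<delta>) - \<rho> \<theta>))"

definition JR1 :: "(real \<Rightarrow> complex mat) \<Rightarrow> real \<Rightarrow> real \<Rightarrow> complex" where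
  "JR1 \<rho> \<theta> \<delta> = mtrace (\<rho> \<theta> * LR1 \<rho> \<theta> \<delta> * mat_adjoint (LR1 \<rho> \<theta> \<delta>))"

end

theory Submission
  imports Defs
begin

text \<open>
  Write \<open>\<sigma> = \<rho>\<^sub>\<theta>\<^sup>\<otimes>\<^sup>n\<close> and \<open>\<tau> = \<rho>\<^sub>\<theta>\<^sub>+\<^sub>\<delta>\<^sup>\<otimes>\<^sup>n\<close>, and let \<open>P\<close>, \<open>Q\<close> be the outcome distributions
  of \<open>M\<^sub>n\<close> in these states.
  A Cauchy--Schwarz inequality for traces gives \<open>Q(A)\<^sup>2 \<le> P(A) \<nu>(A)\<close> with \<open>\<nu>(A) = Tr(\<tau> \<sigma>\<^sup>-\<^sup>1 \<tau> M(A))\<close>, and the classical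
  Hammersley--Chapman--Robbins argument turns this into
  \<open>(E\<^sub>Q f - E\<^sub>P f)\<^sup>2 \<le> E\<^sub>P f\<^sup>2 (\<nu>(\<real>) - 1)\<close> for every \<open>f\<close> with \<open>E\<^sub>P f\<^sup>2 < \<infinity>\<close>.
  For \<open>f(\<gamma>) = \<gamma> - g(\<theta>)\<close> the bias bounds make the left-hand side at least \<open>(\<Delta>g/3)\<^sup>2\<close>, while
  \<open>\<nu>(\<real>) = Tr(\<rho>\<^sub>\<theta>\<^sub>+\<^sub>\<delta> \<rho>\<^sub>\<theta>\<^sup>-\<^sup>1 \<rho>\<^sub>\<theta>\<^sub>+\<^sub>\<delta>)\<^sup>n = (1 + \<delta>\<^sup>2 J)\<^sup>n\<close>. Hence
  \<open>V\<^sub>\<theta>(M\<^sub>n) \<ge> (\<Delta>g/3)\<^sup>2 / (1 + \<delta>\<^sup>2 J)\<^sup>n\<close>, which yields the rate.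
\<close>

lemma index_mult_mat_sum:
  assumes "i < dim_row A" "j < dim_col B" "dim_col A = dim_row B"
  shows "(A * B) $$ (i,j) = (\<Sum>k<dim_col A. A $$ (i,k) * B $$ (k,j))"
  using assms by (auto simp: scalar_prod_def atLeast0LessThan intro!: sum.cong)

lemma mult_carrier_mat_square [simp]:
  "A \<in> carrier_mat n n \<Longrightarrow> B \<in> carrier_mat n n \<Longrightarrow> A * B \<in> carrier_mat n n"
  by (rule mult_carrier_mat)

lemma mat_adjoint_dim [simp]:
  fixes A :: "complex mat"
  shows "dim_row (mat_adjoint A) = dim_col A" "dim_col (mat_adjoint A) = dim_row A"
  by (simp_all add: mat_adjoint_def mat_of_rows_def)

lemma mat_adjoint_carrier [simp]:
  fixes A :: "complex mat"
  shows "A \<in> carrier_mat n m \<Longrightarrow> mat_adjoint A \<in> carrier_mat m n"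
  unfolding carrier_mat_def by simp

lemma index_mat_adjoint [simp]:
  fixes A :: "complex mat"
  shows "i < dim_col A \<Longrightarrow> j < dim_row A \<Longrightarrow> mat_adjoint A $$ (i,j) = cnj (A $$ (j,i))"
  by (simp add: mat_adjoint_def mat_of_rows_def)

lemma mat_adjoint_mat_adjoint [simp]:
  fixes A :: "complex mat"
  shows "mat_adjoint (mat_adjoint A) = A"
  by (rule eq_matI) auto

lemma mat_adjoint_mult:
  fixes A B :: "complex mat"
  assumes "A \<in> carrier_mat n m" "B \<in> carrier_mat m k"
  shows "mat_adjoint (A * B) = mat_adjoint B * mat_adjoint A"
proof (rule eq_matI)
  fix i j assume "i < dim_row (mat_adjoint B * mat_adjoint A)" "j < dim_col (mat_adjoint B * mat_adjoint A)"
  hence i: "i < k" and j: "j < n" using assms by auto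
  have "mat_adjoint (A * B) $$ (i, j) = cnj (\<Sum>l<m. A $$ (j,l) * B $$ (l,i))"
    using assms i j by (simp add: index_mult_mat_sum del: index_mult_mat add: index_mult_mat(2,3))
  also have "\<dots> = (\<Sum>l<m. cnj (B $$ (l,i)) * cnj (A $$ (j,l)))"
    by (simp add: mult.commute)
  also have "\<dots> = (mat_adjoint B * mat_adjoint A) $$ (i, j)"
    using assms i j by (simp add: index_mult_mat_sum del: index_mult_mat add: index_mult_mat(2,3))
  finally show "mat_adjoint (A * B) $$ (i, j) = (mat_adjoint B * mat_adjoint A) $$ (i, j)" .
qed (use assms in auto)

lemma mat_adjoint_add:
  fixes A B :: "complex mat"
  assumes "A \<in> carrier_mat n m" "B \<in> carrier_mat n m"
  shows "mat_adjoint (A + B) = mat_adjoint A + mat_adjoint B"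
  using assms by (intro eq_matI) auto

lemma mat_adjoint_minus:
  fixes A B :: "complex mat"
  assumes "A \<in> carrier_mat n m" "B \<in> carrier_mat n m"
  shows "mat_adjoint (A - B) = mat_adjoint A - mat_adjoint B"
  using assms by (intro eq_matI) auto

lemma mat_adjoint_smult:
  fixes A :: "complex mat"
  shows "mat_adjoint (c \<cdot>\<^sub>m A) = cnj c \<cdot>\<^sub>m mat_adjoint A"
  by (intro eq_matI) auto

lemma mat_adjoint_one [simp]: "mat_adjoint (1\<^sub>m n :: complex mat) = 1\<^sub>m n"
  by (intro eq_matI) auto

lemma mtrace_mult_sum:
  fixes A B :: "complex mat"
  assumes "A \<in> carrier_mat n m" "B \<in> carrier_mat m n"
  shows "mtrace (A * B) = (\<Sum>i<n. \<Sum>k<m. A $$ (i,k) * B $$ (k,i))"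
  using assms by (simp add: mtrace_def index_mult_mat_sum del: index_mult_mat add: index_mult_mat(2,3))

lemma mtrace_mult_comm:
  fixes A B :: "complex mat"
  assumes "A \<in> carrier_mat n m" "B \<in> carrier_mat m n"
  shows "mtrace (A * B) = mtrace (B * A)"
proof -
  have "mtrace (A * B) = (\<Sum>k<m. \<Sum>i<n. B $$ (k,i) * A $$ (i,k))"
    using assms by (simp add: mtrace_mult_sum sum.swap[of _ "{..<m}"] mult.commute)
  also have "\<dots> = mtrace (B * A)"
    using assms by (simp add: mtrace_mult_sum)
  finally show ?thesis .
qed

lemma mtrace_add:
  fixes A B :: "complex mat"
  assumes "A \<in> carrier_mat n n" "B \<in> carrier_mat n n"
  shows "mtrace (A + B) = mtrace A + mtrace B"
  using assms by (auto simp: mtrace_def sum.distrib)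

lemma mtrace_minus:
  fixes A B :: "complex mat"
  assumes "A \<in> carrier_mat n n" "B \<in> carrier_mat n n"
  shows "mtrace (A - B) = mtrace A - mtrace B"
  using assms by (auto simp: mtrace_def sum_subtractf)

lemma mtrace_smult:
  fixes A :: "complex mat"
  assumes "A \<in> carrier_mat n n"
  shows "mtrace (c \<cdot>\<^sub>m A) = c * mtrace A"
  using assms by (auto simp: mtrace_def sum_distrib_left intro!: sum.cong)

lemma mtrace_one [simp]: "mtrace (1\<^sub>m n :: complex mat) = of_nat n"
  by (simp add: mtrace_def)

lemma mtrace_adjoint:
  assumes "A \<in> carrier_mat n n"
  shows "mtrace (mat_adjoint A) = cnj (mtrace A)"
  using assms by (auto simp: mtrace_def)

lemma mtrace_hermitian_real:
  assumes "A \<in> carrier_mat n n" "mat_adjoint A = A"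
  shows "mtrace A = complex_of_real (Re (mtrace A))"
  using mtrace_adjoint[OF assms(1)] assms(2) by (simp add: complex_eq_iff)

section \<open>Positive semidefinite matrices\<close>

lemma nonneg_quadratic_discriminant:
  fixes a x b :: real
  assumes "\<And>t. 0 \<le> a + 2 * t * x + t\<^sup>2 * b"
  shows "x\<^sup>2 \<le> a * b"
proof -
  have a0: "a \<ge> 0" using assms[of 0] by simp
  show ?thesis
  proof (cases "b = 0")
    case True
    have "x = 0"
    proof (rule ccontr)
      assume "x \<noteq> 0"
      have "0 \<le> a + 2 * (- (a + 1) / (2 * x)) * x" using assms[of "- (a + 1) / (2 * x)"] True by simp
      also have "2 * (- (a + 1) / (2 * x)) * x = - (a + 1)" using \<open>x \<noteq> 0\<close> by (simp add: field_simps)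
      finally show False by simp
    qed
    then show ?thesis using True by simp
  next
    case False
    have "0 \<le> a + 2 * (- x / b) * x + (- x / b)\<^sup>2 * b" by (rule assms)
    also have "\<dots> = a - x\<^sup>2 / b" using False by (simp add: field_simps power2_eq_square)
    finally have h: "x\<^sup>2 / b \<le> a" by simp
    have "b \<ge> 0"
    proof (rule ccontr)
      assume "\<not> b \<ge> 0"
      hence bn: "b < 0" by simp
      define t where "t = sqrt ((a + 1) / (- b))"
      have tt: "t\<^sup>2 = (a + 1) / (- b)" using bn a0 by (simp add: t_def divide_nonneg_neg)
      have "0 \<le> (a + 2 * t * x + t\<^sup>2 * b) + (a + 2 * (-t) * x + (-t)\<^sup>2 * b)"
        using assms[of t] assms[of "-t"] by linarith
      also have "\<dots> = 2 * (a + t\<^sup>2 * b)" by (simp add: algebra_simps)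
      also have "t\<^sup>2 * b = - (a + 1)" using bn unfolding tt by (simp add: field_simps)
      finally show False by simp
    qed
    then have "b > 0" using False by simp
    then show ?thesis using h by (simp add: divide_le_eq mult.commute)
  qed
qed

definition sesq_form :: "complex mat \<Rightarrow> nat \<Rightarrow> (nat \<Rightarrow> complex) \<Rightarrow> (nat \<Rightarrow> complex) \<Rightarrow> complex" where
  "sesq_form A n u v = (\<Sum>i<n. \<Sum>j<n. cnj (u i) * A $$ (i,j) * v j)"

definition basis_fun :: "nat \<Rightarrow> nat \<Rightarrow> complex" where
  "basis_fun k = (\<lambda>l. if l = k then 1 else 0)"

lemma qform_eq_sesq_form:
  assumes "A \<in> carrier_mat n n"
  shows "qform A (vec n u) = sesq_form A n u u"
  using assms
  by (auto simp: qform_def scalar_prod_def sesq_form_def atLeast0LessThan sum_distrib_left mult.assoc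
      intro!: sum.cong)

lemma sesq_form_add_smult:
  "sesq_form A n (\<lambda>k. u k + c * w k) (\<lambda>k. u k + c * w k) =
   sesq_form A n u u + c * sesq_form A n u w + cnj c * sesq_form A n w u + (cnj c * c) * sesq_form A n w w"
  by (simp add: sesq_form_def algebra_simps sum.distrib sum_distrib_left)

lemma sesq_form_basis_right:
  assumes "k < n"
  shows "sesq_form A n u (basis_fun k) = (\<Sum>i<n. cnj (u i) * A $$ (i,k))"
  using assms by (simp add: sesq_form_def basis_fun_def if_distrib[of "\<lambda>x. _ * x"] cong: if_cong)

lemma sesq_form_basis_basis:
  assumes "i < n" "j < n"
  shows "sesq_form A n (basis_fun i) (basis_fun j) = A $$ (i,j)"
  using assms
  by (simp add: sesq_form_basis_right)
    (simp add: basis_fun_def if_distrib[of cnj] if_distrib[of "\<lambda>x. x * _"] cong: if_cong)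

lemma psd_op_carrier: "psd_op n A \<Longrightarrow> A \<in> carrier_mat n n"
  by (simp add: psd_op_def)

lemma psd_op_sesq_form:
  assumes "psd_op n A"
  shows "sesq_form A n u u = complex_of_real (Re (sesq_form A n u u))" "Re (sesq_form A n u u) \<ge> 0"
proof -
  have "vec n u \<in> carrier_vec n" by simp
  then have "Im (sesq_form A n u u) = 0 \<and> Re (sesq_form A n u u) \<ge> 0"
    using assms unfolding psd_op_def by (auto simp: qform_eq_sesq_form[symmetric])
  then show "sesq_form A n u u = complex_of_real (Re (sesq_form A n u u))" "Re (sesq_form A n u u) \<ge> 0"
    by (simp_all add: complex_eq_iff)
qed

lemma psd_op_diag:
  assumes "psd_op n A" "k < n"
  shows "A $$ (k,k) = complex_of_real (Re (A $$ (k,k)))" "Re (A $$ (k,k)) \<ge> 0"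
  using psd_op_sesq_form[OF assms(1), of "basis_fun k"] by (simp_all add: sesq_form_basis_basis assms)

text \<open>Polarization: testing the form on \<open>e\<^sub>i + e\<^sub>j\<close> and \<open>e\<^sub>i + \<i> e\<^sub>j\<close>.\<close>

lemma psd_op_hermitian_entry:
  assumes "psd_op n A" "i < n" "j < n"
  shows "A $$ (j,i) = cnj (A $$ (i,j))"
proof -
  let ?u = "basis_fun i" and ?w = "basis_fun j"
  have h: "Im (sesq_form A n (\<lambda>k. ?u k + c * ?w k) (\<lambda>k. ?u k + c * ?w k)) = 0" for c
    by (subst psd_op_sesq_form(1)[OF assms(1)]) simp
  have ii: "Im (A $$ (i,i)) = 0" and jj: "Im (A $$ (j,j)) = 0"
    using psd_op_diag(1)[OF assms(1,2)] psd_op_diag(1)[OF assms(1,3)] by (metis Im_complex_of_real)+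
  have "Im (A $$ (i,j) + A $$ (j,i)) = 0"
    using h[of 1] ii jj unfolding sesq_form_add_smult by (simp add: sesq_form_basis_basis assms)
  moreover have "Re (A $$ (i,j)) - Re (A $$ (j,i)) = 0"
    using h[of \<i>] ii jj unfolding sesq_form_add_smult by (simp add: sesq_form_basis_basis assms)
  ultimately show ?thesis by (simp add: complex_eq_iff)
qed

lemma psd_op_hermitian:
  assumes "psd_op n A"
  shows "mat_adjoint A = A"
proof (rule eq_matI)
  fix i j assume "i < dim_row A" "j < dim_col A"
  then show "mat_adjoint A $$ (i, j) = A $$ (i, j)"
    using psd_op_carrier[OF assms] psd_op_hermitian_entry[OF assms, of j i] by simp
qed (use psd_op_carrier[OF assms] in auto)

lemma psd_op_sesq_form_swap:
  assumes "psd_op n A"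
  shows "sesq_form A n w u = cnj (sesq_form A n u w)"
proof -
  have "sesq_form A n w u = (\<Sum>j<n. \<Sum>i<n. cnj (cnj (u j) * A $$ (j,i) * w i))"
    unfolding sesq_form_def
  proof (subst sum.swap, intro sum.cong refl)
    fix i j assume "i \<in> {..<n}" "j \<in> {..<n}"
    then have "A $$ (i,j) = cnj (A $$ (j,i))" using psd_op_hermitian_entry[OF assms, of j i] by simp
    then show "cnj (w i) * A $$ (i, j) * u j = cnj (cnj (u j) * A $$ (j, i) * w i)" by simp
  qed
  then show ?thesis by (simp add: sesq_form_def)
qed

lemma psd_op_cauchy_schwarz:
  assumes "psd_op n A"
  shows "(cmod (sesq_form A n u w))\<^sup>2 \<le> Re (sesq_form A n u u) * Re (sesq_form A n w w)"
proof (cases "sesq_form A n u w = 0")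
  case True
  then show ?thesis using psd_op_sesq_form(2)[OF assms] by simp
next
  case False
  define s where "s = sesq_form A n u w"
  have ws: "sesq_form A n w u = cnj s"
    unfolding s_def by (rule psd_op_sesq_form_swap[OF assms])
  have ss: "s * cnj s = complex_of_real (cmod s) * complex_of_real (cmod s)"
    by (metis complex_norm_square of_real_mult power2_eq_square)
  have "0 \<le> Re (sesq_form A n u u) + 2 * t * cmod s + t\<^sup>2 * Re (sesq_form A n w w)" for t
  proof -
    define c where "c = complex_of_real t * cnj s / complex_of_real (cmod s)"
    have cs: "c * s = complex_of_real (t * cmod s)"
      using ss False by (simp add: c_def s_def field_simps)
    have cc: "cnj c * c = complex_of_real (t\<^sup>2)"
      using ss False by (simp add: c_def s_def field_simps power2_eq_square)
    have "0 \<le> Re (sesq_form A n (\<lambda>k. u k + c * w k) (\<lambda>k. u k + c * w k))"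
      by (rule psd_op_sesq_form(2)[OF assms])
    also have "\<dots> = Re (sesq_form A n u u) + Re (c * s) + Re (cnj (c * s)) + t\<^sup>2 * Re (sesq_form A n w w)"
      unfolding sesq_form_add_smult s_def[symmetric] ws cc by simp
    also have "\<dots> = Re (sesq_form A n u u) + 2 * t * cmod s + t\<^sup>2 * Re (sesq_form A n w w)"
      unfolding cs by simp
    finally show ?thesis .
  qed
  then show ?thesis
    unfolding s_def by (rule nonneg_quadratic_discriminant)
qed

text \<open>Column \<open>k\<close> of the Cholesky factor; it vanishes when \<open>A(k,k) = 0\<close>, as \<open>x / 0 = 0\<close>.\<close>

definition cholesky_col :: "complex mat \<Rightarrow> nat \<Rightarrow> nat \<Rightarrow> complex" where
  "cholesky_col A k i = A $$ (i,k) / complex_of_real (sqrt (Re (A $$ (k,k))))"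

definition cholesky_deflate :: "complex mat \<Rightarrow> nat \<Rightarrow> nat \<Rightarrow> complex mat" where
  "cholesky_deflate A n k = mat n n (\<lambda>(i,j). A $$ (i,j) - cholesky_col A k i * cnj (cholesky_col A k j))"

lemma sqrt_diag_facts:
  fixes a :: real
  assumes "a \<ge> 0"
  shows "complex_of_real (sqrt a) * complex_of_real (sqrt a) = complex_of_real a"
    "cnj (complex_of_real (sqrt a)) = complex_of_real (sqrt a)"
  using assms by (simp_all flip: of_real_mult)

lemma sesq_form_cholesky_deflate:
  assumes A: "psd_op n A" and k: "k < n"
  shows "sesq_form (cholesky_deflate A n k) n u u
    = sesq_form A n u u - complex_of_real ((cmod (sesq_form A n u (basis_fun k)))\<^sup>2 / Re (A $$ (k,k)))"
proof -
  define a where "a = Re (A $$ (k,k))"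
  define s where "s = complex_of_real (sqrt a)"
  define v where "v = cholesky_col A k"
  define y where "y = sesq_form A n u (basis_fun k)"
  have ss: "s * s = complex_of_real a" "cnj s = s"
    using sqrt_diag_facts psd_op_diag(2)[OF A k] by (simp_all add: s_def a_def)
  have v: "v i = A $$ (i,k) / s" for i by (simp add: v_def cholesky_col_def s_def a_def)
  have y: "y = (\<Sum>i<n. cnj (u i) * A $$ (i,k))" using sesq_form_basis_right[OF k] y_def by simp
  have "sesq_form (cholesky_deflate A n k) n u u
      = (\<Sum>i<n. \<Sum>j<n. cnj (u i) * A $$ (i,j) * u j - (cnj (u i) * v i) * (cnj (v j) * u j))"
    unfolding sesq_form_def by (intro sum.cong refl) (simp add: cholesky_deflate_def v_def algebra_simps)
  also have "\<dots> = sesq_form A n u u - (\<Sum>i<n. cnj (u i) * v i) * (\<Sum>j<n. cnj (v j) * u j)"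
    by (simp add: sesq_form_def sum_subtractf sum_distrib_left sum_distrib_right) (rule sum.swap)
  also have "(\<Sum>i<n. cnj (u i) * v i) * (\<Sum>j<n. cnj (v j) * u j) = y / s * cnj (y / s)"
    using ss(2) by (simp add: y v sum_divide_distrib mult.commute)
  also have "\<dots> = complex_of_real ((cmod y)\<^sup>2 / a)"
    using ss by (simp add: complex_norm_square[symmetric])
  finally show ?thesis by (simp add: y_def a_def)
qed

lemma psd_op_cholesky_deflate:
  assumes A: "psd_op n A" and k: "k < n"
  shows "psd_op n (cholesky_deflate A n k)"
  unfolding psd_op_def
proof (intro conjI ballI)
  fix x :: "complex vec" assume x: "x \<in> carrier_vec n"
  let ?u = "\<lambda>i. x $ i" and ?a = "Re (A $$ (k,k))"
  have "x = vec n ?u" using x by auto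
  then have q: "qform (cholesky_deflate A n k) x = sesq_form (cholesky_deflate A n k) n ?u ?u"
    using qform_eq_sesq_form[of "cholesky_deflate A n k" n ?u] by (simp add: cholesky_deflate_def)
  have "(cmod (sesq_form A n ?u (basis_fun k)))\<^sup>2 \<le> Re (sesq_form A n ?u ?u) * ?a"
    using psd_op_cauchy_schwarz[OF A, of ?u "basis_fun k"] by (simp add: sesq_form_basis_basis k)
  then have "(cmod (sesq_form A n ?u (basis_fun k)))\<^sup>2 / ?a \<le> Re (sesq_form A n ?u ?u)"
    using psd_op_diag(2)[OF A k] psd_op_sesq_form(2)[OF A]
    by (cases "?a = 0") (simp_all add: divide_le_eq mult.commute)
  moreover have "Im (sesq_form A n ?u ?u) = 0"
    by (subst psd_op_sesq_form(1)[OF A]) simp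
  ultimately show "Im (qform (cholesky_deflate A n k) x) = 0" "0 \<le> Re (qform (cholesky_deflate A n k) x)"
    unfolding q sesq_form_cholesky_deflate[OF A k] by simp_all
qed (simp add: cholesky_deflate_def)

lemma cholesky_deflate_pivot:
  assumes A: "psd_op n A" and k: "k < n" and i: "i < n"
  shows "cholesky_deflate A n k $$ (i,k) = 0" "cholesky_deflate A n k $$ (k,i) = 0"
proof -
  define a where "a = Re (A $$ (k,k))"
  define s where "s = complex_of_real (sqrt a)"
  have a0: "a \<ge> 0" and Akk: "A $$ (k,k) = complex_of_real a"
    using psd_op_diag[OF A k] by (simp_all add: a_def)
  have ss: "s * s = complex_of_real a" "cnj s = s"
    using sqrt_diag_facts a0 by (simp_all add: s_def)
  have v: "cholesky_col A k j = A $$ (j,k) / s" for j by (simp add: cholesky_col_def s_def a_def)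
  show col: "cholesky_deflate A n k $$ (i,k) = 0"
  proof (cases "a = 0")
    case True
    have "(cmod (A $$ (i,k)))\<^sup>2 \<le> Re (A $$ (i,i)) * a"
      using psd_op_cauchy_schwarz[OF A, of "basis_fun i" "basis_fun k"]
      by (simp add: sesq_form_basis_basis i k a_def)
    then show ?thesis using True i k by (simp add: cholesky_deflate_def v s_def)
  next
    case False
    then have "s \<noteq> 0" using a0 by (simp add: s_def)
    then have vk: "cholesky_col A k k = s" using ss by (simp add: v Akk field_simps flip: ss(1))
    have "cholesky_col A k i * cnj (cholesky_col A k k) = A $$ (i,k)"
      unfolding vk ss(2) v[of i] using \<open>s \<noteq> 0\<close> by simp
    then show ?thesis using i k by (simp add: cholesky_deflate_def)
  qed
  show "cholesky_deflate A n k $$ (k,i) = 0"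
    using col psd_op_hermitian_entry[OF psd_op_cholesky_deflate[OF A k] i k] by simp
qed

text \<open>Induction on the size \<open>r\<close> of the trailing block outside of which \<open>A\<close> vanishes: one
  Cholesky step at the pivot \<open>n - r\<close> shrinks the block.\<close>

lemma psd_op_gram_factor_tail:
  fixes A :: "complex mat"
  assumes "r \<le> n" "psd_op n A"
    and "\<And>i j. i < n \<Longrightarrow> j < n \<Longrightarrow> i < n - r \<or> j < n - r \<Longrightarrow> A $$ (i,j) = 0"
  shows "\<exists>w. \<forall>i<n. \<forall>j<n. A $$ (i,j) = (\<Sum>m\<in>{n-r..<n}. w m i * cnj (w m j))"
  using assms
proof (induction r arbitrary: A)
  case 0
  then show ?case by auto
next
  case (Suc r)
  define k where "k = n - Suc r"
  have k: "k < n" and nr: "n - r = Suc k" and ivl: "{n - Suc r..<n} = insert k {Suc k..<n}"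
    using Suc.prems(1) by (auto simp: k_def)
  define v where "v = cholesky_col A k"
  define A' where "A' = cholesky_deflate A n k"
  have A'_psd: "psd_op n A'" and A'_k: "\<And>i. i < n \<Longrightarrow> A' $$ (i,k) = 0 \<and> A' $$ (k,i) = 0"
    using psd_op_cholesky_deflate[OF Suc.prems(2) k] cholesky_deflate_pivot[OF Suc.prems(2) k]
    by (simp_all add: A'_def)
  have A'_zero: "A' $$ (i,j) = 0" if ij: "i < n" "j < n" "i < n - r \<or> j < n - r" for i j
  proof -
    consider "i < k \<or> j < k" | "i = k" | "j = k" using ij nr by linarith
    then show ?thesis
    proof cases
      case 1
      then have "v i = 0 \<or> v j = 0" and "A $$ (i,j) = 0"
        using Suc.prems(3) ij k by (auto simp: v_def cholesky_col_def k_def)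
      then show ?thesis using ij by (auto simp: A'_def cholesky_deflate_def v_def[symmetric])
    qed (use A'_k ij in auto)
  qed
  obtain w where w: "\<forall>i<n. \<forall>j<n. A' $$ (i,j) = (\<Sum>m\<in>{n-r..<n}. w m i * cnj (w m j))"
    using Suc.IH[OF _ A'_psd A'_zero] Suc.prems(1) by auto
  have "A $$ (i,j) = (\<Sum>m\<in>{n - Suc r..<n}. (w(k := v)) m i * cnj ((w(k := v)) m j))"
    if "i < n" "j < n" for i j
  proof -
    have "(\<Sum>m\<in>{n - Suc r..<n}. (w(k := v)) m i * cnj ((w(k := v)) m j))
        = v i * cnj (v j) + (\<Sum>m\<in>{Suc k..<n}. w m i * cnj (w m j))"
      unfolding ivl by (auto intro!: sum.cong)
    also have "\<dots> = A $$ (i,j)"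
      using w that nr by (simp add: A'_def cholesky_deflate_def v_def[symmetric] algebra_simps)
    finally show ?thesis by simp
  qed
  then show ?case by blast
qed

lemma psd_op_gram_decomposition:
  fixes A :: "complex mat"
  assumes "psd_op n A"
  shows "\<exists>B \<in> carrier_mat n n. A = mat_adjoint B * B"
proof -
  obtain w where w: "\<forall>i<n. \<forall>j<n. A $$ (i,j) = (\<Sum>m\<in>{n-n..<n}. w m i * cnj (w m j))"
    using psd_op_gram_factor_tail[of n n A] assms by auto
  define B where "B = mat n n (\<lambda>(m,i). cnj (w m i))"
  have B: "B \<in> carrier_mat n n" by (simp add: B_def)
  have "A = mat_adjoint B * B"
  proof (rule eq_matI)
    fix i j assume "i < dim_row (mat_adjoint B * B)" "j < dim_col (mat_adjoint B * B)"
    then have i: "i < n" and j: "j < n" using B by auto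
    have "(mat_adjoint B * B) $$ (i,j) = (\<Sum>m<n. w m i * cnj (w m j))"
      using B i j by (simp add: index_mult_mat_sum B_def del: index_mult_mat add: index_mult_mat(2,3))
    then show "A $$ (i, j) = (mat_adjoint B * B) $$ (i, j)"
      using w i j by (simp add: atLeast0LessThan)
  qed (use assms B in \<open>auto simp: psd_op_def\<close>)
  then show ?thesis using B by blast
qed

lemma sesq_form_gram:
  fixes B :: "complex mat"
  assumes "B \<in> carrier_mat m n"
  shows "sesq_form (mat_adjoint B * B) n u u = (\<Sum>k<m. complex_of_real ((cmod (\<Sum>j<n. B $$ (k,j) * u j))\<^sup>2))"
proof -
  have "sesq_form (mat_adjoint B * B) n u u = (\<Sum>i<n. \<Sum>j<n. \<Sum>k<m. cnj (B $$ (k,i) * u i) * (B $$ (k,j) * u j))"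
    unfolding sesq_form_def using assms
    by (intro sum.cong refl) (simp add: index_mult_mat_sum sum_distrib_left sum_distrib_right mult_ac
        del: index_mult_mat add: index_mult_mat(2,3))
  also have "\<dots> = (\<Sum>i<n. \<Sum>k<m. \<Sum>j<n. cnj (B $$ (k,i) * u i) * (B $$ (k,j) * u j))"
    by (rule sum.cong[OF refl], rule sum.swap)
  also have "\<dots> = (\<Sum>k<m. \<Sum>i<n. \<Sum>j<n. cnj (B $$ (k,i) * u i) * (B $$ (k,j) * u j))"
    by (rule sum.swap)
  also have "\<dots> = (\<Sum>k<m. cnj (\<Sum>j<n. B $$ (k,j) * u j) * (\<Sum>j<n. B $$ (k,j) * u j))"
    by (simp add: sum_product)
  also have "\<dots> = (\<Sum>k<m. complex_of_real ((cmod (\<Sum>j<n. B $$ (k,j) * u j))\<^sup>2))"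
    by (intro sum.cong refl) (metis complex_norm_square mult.commute)
  finally show ?thesis .
qed

lemma psd_op_gram:
  fixes B :: "complex mat"
  assumes "B \<in> carrier_mat m n"
  shows "psd_op n (mat_adjoint B * B)"
proof -
  have BB: "mat_adjoint B * B \<in> carrier_mat n n"
    using assms by (metis mat_adjoint_carrier mult_carrier_mat)
  have "Im (qform (mat_adjoint B * B) x) = 0 \<and> 0 \<le> Re (qform (mat_adjoint B * B) x)"
    if x: "x \<in> carrier_vec n" for x
  proof -
    have xv: "x = vec n (\<lambda>i. x $ i)" using x by auto
    have "qform (mat_adjoint B * B) x = sesq_form (mat_adjoint B * B) n (\<lambda>i. x $ i) (\<lambda>i. x $ i)"
      by (subst xv) (rule qform_eq_sesq_form[OF BB])
    then have "qform (mat_adjoint B * B) x = (\<Sum>k<m. complex_of_real ((cmod (\<Sum>j<n. B $$ (k,j) * x $ j))\<^sup>2))"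
      unfolding sesq_form_gram[OF assms] .
    then show ?thesis by (simp add: Im_sum Re_sum sum_nonneg del: of_real_power)
  qed
  then show ?thesis using BB by (simp add: psd_op_def)
qed

lemma psd_op_congruence:
  fixes M Y :: "complex mat"
  assumes "psd_op n M" "Y \<in> carrier_mat n m"
  shows "psd_op m (mat_adjoint Y * M * Y)"
proof -
  obtain B where B: "B \<in> carrier_mat n n" "M = mat_adjoint B * B"
    using psd_op_gram_decomposition[OF assms(1)] by blast
  have "mat_adjoint Y * M * Y = mat_adjoint Y * ((mat_adjoint B * B) * Y)"
    unfolding B(2) by (rule assoc_mult_mat[of _ m n _ n _ m]) (use B(1) assms(2) in auto)
  also have "(mat_adjoint B * B) * Y = mat_adjoint B * (B * Y)"
    by (rule assoc_mult_mat[of _ n n _ n _ m]) (use B(1) assms(2) in auto)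
  also have "mat_adjoint Y * (mat_adjoint B * (B * Y)) = mat_adjoint (B * Y) * (B * Y)"
    using B(1) assms(2)
    by (simp add: mat_adjoint_mult[of B n n Y m]
        assoc_mult_mat[of "mat_adjoint Y" m n "mat_adjoint B" n "B * Y" m])
  finally have "mat_adjoint Y * M * Y = mat_adjoint (B * Y) * (B * Y)" .
  then show ?thesis using psd_op_gram[of "B * Y" n m] B assms(2) by simp
qed

lemma psd_op_mtrace_nonneg:
  assumes "psd_op n A"
  shows "Re (mtrace A) \<ge> 0"
  using psd_op_diag(2)[OF assms] psd_op_carrier[OF assms]
  by (auto simp: mtrace_def Re_sum intro: sum_nonneg)

lemma mtrace_mult_psd_nonneg:
  assumes "psd_op n X" "psd_op n Y"
  shows "Re (mtrace (X * Y)) \<ge> 0"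
proof -
  obtain C where C: "C \<in> carrier_mat n n" "X = mat_adjoint C * C"
    using psd_op_gram_decomposition[OF assms(1)] by blast
  have Y: "Y \<in> carrier_mat n n" by (rule psd_op_carrier[OF assms(2)])
  have "mtrace (X * Y) = mtrace (C * (Y * mat_adjoint C))"
    using C Y by (simp add: assoc_mult_mat[of _ n n _ n _ n] mtrace_mult_comm[of "mat_adjoint C" n n])
  also have "C * (Y * mat_adjoint C) = mat_adjoint (mat_adjoint C) * Y * mat_adjoint C"
    using C Y by (simp add: assoc_mult_mat[of _ n n _ n _ n])
  finally show ?thesis
    using psd_op_mtrace_nonneg[OF psd_op_congruence[OF assms(2), of "mat_adjoint C" n]] C by simp
qed

lemma minv_pd_op:
  fixes A :: "complex mat"
  assumes "pd_op n A"
  shows "minv A \<in> carrier_mat n n" "A * minv A = 1\<^sub>m n" "minv A * A = 1\<^sub>m n"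
proof -
  have A: "A \<in> carrier_mat n n" using assms by (simp add: pd_op_def psd_op_def)
  have "det A \<noteq> 0"
  proof
    assume "det A = 0"
    then obtain v where v: "v \<in> carrier_vec n" "v \<noteq> 0\<^sub>v n" "A *\<^sub>v v = 0\<^sub>v n"
      using det_0_iff_vec_prod_zero[OF A] by auto
    have "qform A v = 0" using v by (simp add: qform_def)
    then show False using assms v unfolding pd_op_def by force
  qed
  then have "A \<in> Units (ring_mat TYPE(complex) n ())" by (rule det_non_zero_imp_unit[OF A])
  then have "\<exists>B. B \<in> carrier_mat (dim_row A) (dim_row A) \<and> A * B = 1\<^sub>m (dim_row A) \<and> B * A = 1\<^sub>m (dim_row A)"
    using A by (auto simp: Units_def ring_mat_def)
  from someI_ex[OF this] A show "minv A \<in> carrier_mat n n" "A * minv A = 1\<^sub>m n" "minv A * A = 1\<^sub>m n"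
    unfolding minv_def by auto
qed

lemma mat_adjoint_inverse_hermitian:
  fixes A B :: "complex mat"
  assumes "A \<in> carrier_mat n n" "B \<in> carrier_mat n n" "mat_adjoint A = A" "A * B = 1\<^sub>m n" "B * A = 1\<^sub>m n"
  shows "mat_adjoint B = B"
proof -
  have "mat_adjoint B * A = 1\<^sub>m n"
    using mat_adjoint_mult[OF assms(1,2)] assms by simp
  then have "B = mat_adjoint B * (A * B)"
    using assms by (metis assoc_mult_mat left_mult_one_mat mat_adjoint_carrier)
  then show ?thesis using assms(2,4) by simp
qed

section \<open>Kronecker products and tensor powers\<close>

lemma sum_lessThan_mult_split:
  "(\<Sum>l<a * b. f l) = (\<Sum>p<a. \<Sum>q<(b::nat). f (p * b + q))"
proof -
  have "(\<Sum>l<a * b. f l) = (\<Sum>p<a. sum f {p * b..<p * b + b})"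
    by (rule sum.nat_group[symmetric])
  also have "\<dots> = (\<Sum>p<a. \<Sum>q<b. f (p * b + q))"
  proof (rule sum.cong[OF refl])
    fix p
    have "sum f {p * b..<p * b + b} = sum f {0 + p * b..<b + p * b}" by (simp add: add.commute)
    also have "\<dots> = (\<Sum>q\<in>{0..<b}. f (q + p * b))" by (rule sum.shift_bounds_nat_ivl)
    finally show "sum f {p * b..<p * b + b} = (\<Sum>q<b. f (p * b + q))"
      by (simp add: atLeast0LessThan add.commute)
  qed
  finally show ?thesis .
qed

lemma mult_add_less_mult:
  fixes p q a b :: nat
  assumes "p < a" "q < b"
  shows "p * b + q < a * b"
proof -
  have "Suc p * b \<le> a * b" using assms(1) by (intro mult_le_mono1) simp
  then show ?thesis using assms(2) by simp
qed

lemma kron_dim [simp]: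
  "dim_row (kron A B) = dim_row A * dim_row B" "dim_col (kron A B) = dim_col A * dim_col B"
  by (simp_all add: kron_def)

lemma kron_carrier [simp]:
  "A \<in> carrier_mat a1 a2 \<Longrightarrow> B \<in> carrier_mat b1 b2 \<Longrightarrow> kron A B \<in> carrier_mat (a1 * b1) (a2 * b2)"
  unfolding carrier_mat_def by simp

lemma index_kron:
  "i < dim_row A * dim_row B \<Longrightarrow> j < dim_col A * dim_col B \<Longrightarrow>
    kron A B $$ (i,j) = A $$ (i div dim_row B, j div dim_col B) * B $$ (i mod dim_row B, j mod dim_col B)"
  by (simp add: kron_def)

lemma div_mod_less:
  assumes "i < a * (b::nat)"
  shows "i div b < a" "i mod b < b"
proof -
  have "b > 0" using assms by (cases b) auto
  then show "i mod b < b" by simp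
  show "i div b < a" using assms by (simp add: less_mult_imp_div_less)
qed

lemma kron_mult:
  assumes A: "A \<in> carrier_mat a1 a2" and B: "B \<in> carrier_mat b1 b2"
    and C: "C \<in> carrier_mat a2 a3" and D: "D \<in> carrier_mat b2 b3"
  shows "kron A B * kron C D = kron (A * C) (B * D)"
proof (rule eq_matI)
  fix i j assume "i < dim_row (kron (A * C) (B * D))" "j < dim_col (kron (A * C) (B * D))"
  hence i: "i < a1 * b1" and j: "j < a3 * b3" using A B C D by auto
  have "(kron A B * kron C D) $$ (i,j) = (\<Sum>l<a2 * b2. kron A B $$ (i,l) * kron C D $$ (l,j))"
    using A B C D i j
    by (subst index_mult_mat_sum) (auto simp del: index_mult_mat simp add: index_mult_mat(2,3))
  also have "\<dots> = (\<Sum>p<a2. \<Sum>q<b2. kron A B $$ (i, p * b2 + q) * kron C D $$ (p * b2 + q, j))"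
    by (rule sum_lessThan_mult_split)
  also have "\<dots> = (\<Sum>p<a2. \<Sum>q<b2.
      (A $$ (i div b1, p) * C $$ (p, j div b3)) * (B $$ (i mod b1, q) * D $$ (q, j mod b3)))"
    using A B C D i j by (intro sum.cong refl) (simp add: index_kron mult_add_less_mult)
  also have "\<dots> = (\<Sum>p<a2. A $$ (i div b1, p) * C $$ (p, j div b3))
      * (\<Sum>q<b2. B $$ (i mod b1, q) * D $$ (q, j mod b3))"
    by (simp add: sum_product)
  also have "\<dots> = kron (A * C) (B * D) $$ (i,j)"
    using A B C D i j div_mod_less[OF i] div_mod_less[OF j]
    by (simp add: index_kron index_mult_mat_sum del: index_mult_mat add: index_mult_mat(2,3))
  finally show "(kron A B * kron C D) $$ (i, j) = kron (A * C) (B * D) $$ (i, j)" .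
qed (use A B C D in auto)

lemma mat_adjoint_kron:
  fixes A B :: "complex mat"
  shows "mat_adjoint (kron A B) = kron (mat_adjoint A) (mat_adjoint B)"
proof (rule eq_matI)
  fix i j
  assume "i < dim_row (kron (mat_adjoint A) (mat_adjoint B))" "j < dim_col (kron (mat_adjoint A) (mat_adjoint B))"
  hence i: "i < dim_col A * dim_col B" and j: "j < dim_row A * dim_row B" by auto
  show "mat_adjoint (kron A B) $$ (i, j) = kron (mat_adjoint A) (mat_adjoint B) $$ (i, j)"
    using i j div_mod_less[OF i] div_mod_less[OF j] by (simp add: index_kron)
qed auto

lemma mtrace_kron:
  fixes A B :: "complex mat"
  assumes A: "A \<in> carrier_mat a a" and B: "B \<in> carrier_mat b b"
  shows "mtrace (kron A B) = mtrace A * mtrace B"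
proof -
  have "mtrace (kron A B) = (\<Sum>p<a. \<Sum>q<b. kron A B $$ (p * b + q, p * b + q))"
    using A B by (simp add: mtrace_def sum_lessThan_mult_split)
  also have "\<dots> = (\<Sum>p<a. \<Sum>q<b. A $$ (p,p) * B $$ (q,q))"
    using A B by (intro sum.cong refl) (simp add: index_kron mult_add_less_mult)
  also have "\<dots> = mtrace A * mtrace B"
    using A B by (simp add: mtrace_def sum_product)
  finally show ?thesis .
qed

lemma kron_one: "kron (1\<^sub>m a) (1\<^sub>m b) = (1\<^sub>m (a * b) :: complex mat)"
proof (rule eq_matI)
  fix i j assume "i < dim_row (1\<^sub>m (a * b) :: complex mat)" "j < dim_col (1\<^sub>m (a * b) :: complex mat)"
  hence i: "i < a * b" and j: "j < a * b" by auto
  have "(i div b = j div b \<and> i mod b = j mod b) = (i = j)"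
    by (metis div_mult_mod_eq)
  then show "kron (1\<^sub>m a) (1\<^sub>m b) $$ (i, j) = (1\<^sub>m (a * b) :: complex mat) $$ (i, j)"
    using i j div_mod_less[OF i] div_mod_less[OF j] by (auto simp: index_kron)
qed auto

lemma tensor_pow_carrier [simp]:
  "A \<in> carrier_mat d d \<Longrightarrow> tensor_pow A n \<in> carrier_mat (d ^ n) (d ^ n)"
  by (induction n) (auto simp: mult.commute)

lemma tensor_pow_mult:
  assumes "A \<in> carrier_mat d d" "B \<in> carrier_mat d d"
  shows "tensor_pow (A * B) n = tensor_pow A n * tensor_pow B n"
  by (induction n)
    (simp_all add: kron_mult[OF tensor_pow_carrier[OF assms(1)] assms(1) tensor_pow_carrier[OF assms(2)] assms(2)])

lemma tensor_pow_adjoint: "tensor_pow (mat_adjoint A) n = mat_adjoint (tensor_pow A n)"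
  by (induction n) (simp_all add: mat_adjoint_kron)

lemma mtrace_tensor_pow:
  assumes "A \<in> carrier_mat d d"
  shows "mtrace (tensor_pow A n) = (mtrace A) ^ n"
  by (induction n) (simp_all add: mtrace_kron[OF tensor_pow_carrier[OF assms] assms])

lemma tensor_pow_one: "tensor_pow (1\<^sub>m d) n = (1\<^sub>m (d ^ n) :: complex mat)"
  by (induction n) (simp_all add: kron_one mult.commute)

lemma psd_op_tensor_pow:
  assumes "psd_op d A"
  shows "psd_op (d ^ n) (tensor_pow A n)"
proof -
  obtain B where B: "B \<in> carrier_mat d d" "A = mat_adjoint B * B"
    using psd_op_gram_decomposition[OF assms] by blast
  then have "tensor_pow A n = mat_adjoint (tensor_pow B n) * tensor_pow B n"
    using tensor_pow_mult[of "mat_adjoint B" d B n] by (simp add: tensor_pow_adjoint)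
  then show ?thesis using psd_op_gram[OF tensor_pow_carrier[OF B(1)]] by simp
qed

section \<open>A Cauchy--Schwarz inequality for traces\<close>

definition trace_pairing :: "complex mat \<Rightarrow> complex mat \<Rightarrow> complex mat \<Rightarrow> complex mat \<Rightarrow> complex" where
  "trace_pairing M \<sigma> P Q = mtrace (P * M * Q * \<sigma>)"

lemma trace_pairing_linear_left:
  fixes M \<sigma> P1 P2 Q :: "complex mat"
  assumes "M \<in> carrier_mat N N" "\<sigma> \<in> carrier_mat N N" "P1 \<in> carrier_mat N N" "P2 \<in> carrier_mat N N"
    "Q \<in> carrier_mat N N"
  shows "trace_pairing M \<sigma> (P1 + c \<cdot>\<^sub>m P2) Q = trace_pairing M \<sigma> P1 Q + c * trace_pairing M \<sigma> P2 Q"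
proof -
  have "(P1 + c \<cdot>\<^sub>m P2) * M * Q * \<sigma> = P1 * M * Q * \<sigma> + c \<cdot>\<^sub>m (P2 * M * Q * \<sigma>)"
    using assms by (simp add: add_mult_distrib_mat[of _ N N _ _ N] mult_smult_assoc_mat[of _ N N _ N])
  then show ?thesis
    unfolding trace_pairing_def using assms by (simp add: mtrace_add[of _ N] mtrace_smult[of _ N])
qed

lemma trace_pairing_linear_right:
  fixes M \<sigma> P Q1 Q2 :: "complex mat"
  assumes "M \<in> carrier_mat N N" "\<sigma> \<in> carrier_mat N N" "P \<in> carrier_mat N N" "Q1 \<in> carrier_mat N N"
    "Q2 \<in> carrier_mat N N"
  shows "trace_pairing M \<sigma> P (Q1 + c \<cdot>\<^sub>m Q2) = trace_pairing M \<sigma> P Q1 + c * trace_pairing M \<sigma> P Q2"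
proof -
  have "P * M * (Q1 + c \<cdot>\<^sub>m Q2) = P * M * Q1 + c \<cdot>\<^sub>m (P * M * Q2)"
    using assms by (simp add: mult_add_distrib_mat[of _ N N _ N] mult_smult_distrib[of _ N N _ N])
  then have "P * M * (Q1 + c \<cdot>\<^sub>m Q2) * \<sigma> = P * M * Q1 * \<sigma> + c \<cdot>\<^sub>m (P * M * Q2 * \<sigma>)"
    using assms by (simp add: add_mult_distrib_mat[of _ N N _ _ N] mult_smult_assoc_mat[of _ N N _ N])
  then show ?thesis
    unfolding trace_pairing_def using assms by (simp add: mtrace_add[of _ N] mtrace_smult[of _ N])
qed

lemma trace_pairing_nonneg:
  assumes "psd_op N M" "psd_op N \<sigma>" "Z \<in> carrier_mat N N"
  shows "0 \<le> Re (trace_pairing M \<sigma> (mat_adjoint Z) Z)"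
  unfolding trace_pairing_def by (rule mtrace_mult_psd_nonneg[OF psd_op_congruence[OF assms(1,3)] assms(2)])

lemma trace_pairing_inverse_sandwich:
  fixes \<sigma> S \<tau> M :: "complex mat"
  assumes \<sigma>: "\<sigma> \<in> carrier_mat N N"
    and S: "S \<in> carrier_mat N N" "mat_adjoint S = S" "S * \<sigma> = 1\<^sub>m N" "\<sigma> * S = 1\<^sub>m N"
    and \<tau>: "\<tau> \<in> carrier_mat N N" "mat_adjoint \<tau> = \<tau>" and M: "M \<in> carrier_mat N N"
  shows "trace_pairing M \<sigma> (1\<^sub>m N) (1\<^sub>m N) = mtrace (\<sigma> * M)"
    and "trace_pairing M \<sigma> (1\<^sub>m N) (\<tau> * S) = mtrace (\<tau> * M)"
    and "trace_pairing M \<sigma> (mat_adjoint (\<tau> * S)) (1\<^sub>m N) = mtrace (\<tau> * M)"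
    and "trace_pairing M \<sigma> (mat_adjoint (\<tau> * S)) (\<tau> * S) = mtrace (\<tau> * S * \<tau> * M)"
proof -
  note assoc = assoc_mult_mat[of _ N N _ N _ N]
  have adj: "mat_adjoint (\<tau> * S) = S * \<tau>" using mat_adjoint_mult[OF \<tau>(1) S(1)] S \<tau> by simp
  show "trace_pairing M \<sigma> (1\<^sub>m N) (1\<^sub>m N) = mtrace (\<sigma> * M)"
    unfolding trace_pairing_def using M \<sigma> by (simp add: mtrace_mult_comm[of M N N \<sigma>])
  have "1\<^sub>m N * M * (\<tau> * S) * \<sigma> = M * \<tau>" using M \<tau> S \<sigma> by (simp add: assoc)
  then show "trace_pairing M \<sigma> (1\<^sub>m N) (\<tau> * S) = mtrace (\<tau> * M)"
    unfolding trace_pairing_def using M \<tau> by (simp add: mtrace_mult_comm[of M N N \<tau>])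
  have "mat_adjoint (\<tau> * S) * M * 1\<^sub>m N * \<sigma> = S * (\<tau> * M * \<sigma>)" unfolding adj using M \<tau> S \<sigma> by (simp add: assoc)
  then have "trace_pairing M \<sigma> (mat_adjoint (\<tau> * S)) (1\<^sub>m N) = mtrace ((\<tau> * M * \<sigma>) * S)"
    unfolding trace_pairing_def using M \<tau> S \<sigma> by (simp add: mtrace_mult_comm[of S N N])
  also have "(\<tau> * M * \<sigma>) * S = \<tau> * M"
    using M \<tau> S \<sigma> by (simp add: assoc)
  finally show "trace_pairing M \<sigma> (mat_adjoint (\<tau> * S)) (1\<^sub>m N) = mtrace (\<tau> * M)" .
  have "mat_adjoint (\<tau> * S) * M * (\<tau> * S) * \<sigma> = S * (\<tau> * M * \<tau>)" unfolding adj using M \<tau> S \<sigma>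
    by (simp add: assoc)
  then have "trace_pairing M \<sigma> (mat_adjoint (\<tau> * S)) (\<tau> * S) = mtrace ((\<tau> * M) * (\<tau> * S))"
    unfolding trace_pairing_def using M \<tau> S \<sigma> by (simp add: mtrace_mult_comm[of S N N] assoc)
  also have "\<dots> = mtrace ((\<tau> * S) * (\<tau> * M))"
    by (rule mtrace_mult_comm[of _ N N]) (use M \<tau> S in auto)
  also have "(\<tau> * S) * (\<tau> * M) = \<tau> * S * \<tau> * M"
    using M \<tau> S by (simp add: assoc)
  finally show "trace_pairing M \<sigma> (mat_adjoint (\<tau> * S)) (\<tau> * S) = mtrace (\<tau> * S * \<tau> * M)" .
qed

text \<open>Cauchy--Schwarz for the positive form \<open>(P, Q) \<mapsto> Tr(P\<^sup>\<dagger> M Q \<sigma>)\<close>, applied to \<open>1\<close> and \<open>\<tau> \<sigma>\<^sup>-\<^sup>1\<close>.\<close>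

lemma mtrace_cauchy_schwarz:
  fixes \<sigma> S \<tau> M :: "complex mat"
  assumes \<sigma>: "psd_op N \<sigma>"
    and S: "S \<in> carrier_mat N N" "mat_adjoint S = S" "S * \<sigma> = 1\<^sub>m N" "\<sigma> * S = 1\<^sub>m N"
    and \<tau>: "\<tau> \<in> carrier_mat N N" "mat_adjoint \<tau> = \<tau>"
    and M: "psd_op N M"
  shows "(Re (mtrace (\<tau> * M)))\<^sup>2 \<le> Re (mtrace (\<sigma> * M)) * Re (mtrace (\<tau> * S * \<tau> * M))"
proof -
  have Mc: "M \<in> carrier_mat N N" and \<sigma>c: "\<sigma> \<in> carrier_mat N N"
    using M \<sigma> by (simp_all add: psd_op_carrier)
  have Y: "\<tau> * S \<in> carrier_mat N N" using \<tau> S by simp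
  note pairings = trace_pairing_inverse_sandwich[OF \<sigma>c S \<tau> Mc]
  have "0 \<le> Re (mtrace (\<sigma> * M)) + 2 * t * Re (mtrace (\<tau> * M)) + t\<^sup>2 * Re (mtrace (\<tau> * S * \<tau> * M))"
    for t :: real
  proof -
    define Z where "Z = 1\<^sub>m N + complex_of_real t \<cdot>\<^sub>m (\<tau> * S)"
    have Zc: "Z \<in> carrier_mat N N" using Y by (simp add: Z_def)
    have "mat_adjoint Z = 1\<^sub>m N + complex_of_real t \<cdot>\<^sub>m mat_adjoint (\<tau> * S)"
      unfolding Z_def using Y by (simp add: mat_adjoint_add[of _ N N] mat_adjoint_smult)
    then have "trace_pairing M \<sigma> (mat_adjoint Z) Z = mtrace (\<sigma> * M) + of_real t * mtrace (\<tau> * M)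
        + of_real t * (mtrace (\<tau> * M) + of_real t * mtrace (\<tau> * S * \<tau> * M))"
      using Mc \<sigma>c Y
      by (simp add: Z_def trace_pairing_linear_left[of _ N] trace_pairing_linear_right[of _ N] pairings)
    then have "Re (trace_pairing M \<sigma> (mat_adjoint Z) Z)
        = Re (mtrace (\<sigma> * M)) + 2 * t * Re (mtrace (\<tau> * M)) + t\<^sup>2 * Re (mtrace (\<tau> * S * \<tau> * M))"
      by (simp add: algebra_simps power2_eq_square)
    then show ?thesis using trace_pairing_nonneg[OF M \<sigma> Zc] by simp
  qed
  then show ?thesis by (rule nonneg_quadratic_discriminant)
qed

lemma povm_psd_op: "is_povm N M \<Longrightarrow> A \<in> sets borel \<Longrightarrow> psd_op N (M A)"
  by (simp add: is_povm_def)

lemma povm_empty: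
  assumes "is_povm N M" "i < N" "j < N"
  shows "M {} $$ (i,j) = 0"
proof -
  define c where "c = M {} $$ (i,j)"
  have "(\<lambda>n. \<Sum>k<n. M ((\<lambda>_. {}) k) $$ (i, j)) \<longlonglongrightarrow> M (\<Union>k. (\<lambda>_. {}) k) $$ (i, j)"
    using assms unfolding is_povm_def by (auto simp: disjoint_family_on_def)
  then have l: "(\<lambda>n. of_nat n * c) \<longlonglongrightarrow> c" by (simp add: c_def)
  have "(\<lambda>n. of_nat (Suc n) * c - of_nat n * c) \<longlonglongrightarrow> c - c"
    by (intro tendsto_diff l LIMSEQ_Suc[OF l])
  then have "(\<lambda>n. c) \<longlonglongrightarrow> 0" by (simp add: algebra_simps)
  then show ?thesis using LIMSEQ_unique[OF tendsto_const] c_def by metis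
qed

lemma sigma_algebra_borel_real: "sigma_algebra (UNIV :: real set) (sets borel)"
  using sets.sigma_algebra_axioms[of "borel :: real measure"] by simp

lemma sets_outcome_dist [simp, measurable_cong]: "sets (outcome_dist X M) = sets borel"
  unfolding outcome_dist_def by (rule sigma_algebra.sets_measure_of_eq[OF sigma_algebra_borel_real])

lemma space_outcome_dist [simp]: "space (outcome_dist X M) = UNIV"
  unfolding outcome_dist_def by (rule space_measure_of_conv)

lemma countably_additive_outcome:
  assumes X: "psd_op N X" and M: "is_povm N M"
  shows "countably_additive (sets borel) (\<lambda>A. ennreal (Re (mtrace (X * M A))))"
  unfolding countably_additive_def
proof (intro allI impI)
  fix F :: "nat \<Rightarrow> real set"
  assume F: "range F \<subseteq> sets borel" "disjoint_family F" "\<Union> (range F) \<in> sets borel"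
  have Xc: "X \<in> carrier_mat N N" using X by (rule psd_op_carrier)
  have MF: "M (F k) \<in> carrier_mat N N" for k
    using F(1) povm_psd_op[OF M] psd_op_carrier by blast
  have MU: "M (\<Union>k. F k) \<in> carrier_mat N N"
    using F(3) povm_psd_op[OF M] psd_op_carrier by blast
  have "(\<lambda>n. \<Sum>i<N. \<Sum>j<N. X $$ (i,j) * (\<Sum>k<n. M (F k) $$ (j,i)))
      \<longlonglongrightarrow> (\<Sum>i<N. \<Sum>j<N. X $$ (i,j) * M (\<Union>k. F k) $$ (j,i))"
    using M F(1,2) unfolding is_povm_def by (intro tendsto_sum tendsto_mult tendsto_const) auto
  moreover have "(\<Sum>k<n. mtrace (X * M (F k))) = (\<Sum>i<N. \<Sum>j<N. X $$ (i,j) * (\<Sum>k<n. M (F k) $$ (j,i)))" for n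
  proof -
    have "(\<Sum>k<n. mtrace (X * M (F k))) = (\<Sum>k<n. \<Sum>i<N. \<Sum>j<N. X $$ (i,j) * M (F k) $$ (j,i))"
      using Xc MF by (intro sum.cong refl) (rule mtrace_mult_sum)
    also have "\<dots> = (\<Sum>i<N. \<Sum>j<N. \<Sum>k<n. X $$ (i,j) * M (F k) $$ (j,i))"
      by (subst sum.swap) (rule sum.cong[OF refl], rule sum.swap)
    finally show ?thesis by (simp add: sum_distrib_left)
  qed
  ultimately have "(\<lambda>n. \<Sum>k<n. mtrace (X * M (F k))) \<longlonglongrightarrow> mtrace (X * M (\<Union>k. F k))"
    using Xc MU by (simp add: mtrace_mult_sum)
  then have "(\<lambda>n. Re (\<Sum>k<n. mtrace (X * M (F k)))) \<longlonglongrightarrow> Re (mtrace (X * M (\<Union>k. F k)))"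
    by (rule tendsto_Re)
  then have sums: "(\<lambda>k. Re (mtrace (X * M (F k)))) sums Re (mtrace (X * M (\<Union>k. F k)))"
    unfolding sums_def by simp
  have nonneg: "Re (mtrace (X * M (F k))) \<ge> 0" for k
    using F(1) by (intro mtrace_mult_psd_nonneg[OF X] povm_psd_op[OF M]) auto
  have "(\<Sum>k. ennreal (Re (mtrace (X * M (F k))))) = ennreal (\<Sum>k. Re (mtrace (X * M (F k))))"
    by (rule suminf_ennreal2[OF nonneg sums_summable[OF sums]])
  also have "(\<Sum>k. Re (mtrace (X * M (F k)))) = Re (mtrace (X * M (\<Union>k. F k)))"
    by (rule sums_unique[OF sums, symmetric])
  finally show "(\<Sum>k. ennreal (Re (mtrace (X * M (F k))))) = ennreal (Re (mtrace (X * M (\<Union> (range F)))))" .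
qed

lemma emeasure_outcome_dist:
  assumes "psd_op N X" "is_povm N M" "A \<in> sets borel"
  shows "emeasure (outcome_dist X M) A = ennreal (Re (mtrace (X * M A)))"
proof -
  have "Re (mtrace (X * M {})) = 0"
    using psd_op_carrier[OF assms(1)] povm_psd_op[OF assms(2), of "{}"] povm_empty[OF assms(2)]
    by (simp add: mtrace_mult_sum[of _ N N] psd_op_carrier)
  then show ?thesis
    unfolding outcome_dist_def
    by (intro emeasure_measure_of_sigma sigma_algebra_borel_real
        countably_additive_outcome[OF assms(1,2)] assms(3)) (simp add: positive_def)
qed

lemma measure_outcome_dist:
  assumes "psd_op N X" "is_povm N M" "A \<in> sets borel"
  shows "measure (outcome_dist X M) A = Re (mtrace (X * M A))"
  using emeasure_outcome_dist[OF assms] mtrace_mult_psd_nonneg[OF assms(1) povm_psd_op[OF assms(2,3)]]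
  by (simp add: measure_def)

lemma finite_measure_outcome_dist:
  assumes "psd_op N X" "is_povm N M"
  shows "finite_measure (outcome_dist X M)"
  by (rule finite_measureI) (simp add: emeasure_outcome_dist[OF assms])

lemma prob_space_outcome_dist:
  assumes "psd_op N X" "is_povm N M" "mtrace X = 1"
  shows "prob_space (outcome_dist X M)"
proof
  have "M UNIV = 1\<^sub>m N" using assms(2) by (simp add: is_povm_def)
  then show "emeasure (outcome_dist X M) (space (outcome_dist X M)) = 1"
    using assms psd_op_carrier[OF assms(1)] by (simp add: emeasure_outcome_dist)
qed

section \<open>The Hammersley--Chapman--Robbins inequality\<close>

lemma simple_integral_eq_sum:
  fixes M :: "real measure" and s h :: "real \<Rightarrow> real"
  assumes sM: "sets M = sets borel" and fM: "finite_measure M" and s: "simple_function borel s"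
  shows "(\<integral>x. h (s x) \<partial>M) = (\<Sum>v\<in>range s. h v * measure M (s -` {v}))"
proof -
  interpret finite_measure M by (rule fM)
  have sp: "space M = UNIV" using sets_eq_imp_space_eq[OF sM] by simp
  have fin: "finite (range s)" using simple_functionD(1)[OF s] by simp
  have meas: "s -` {v} \<in> sets M" for v
    using simple_functionD(2)[OF s, of "{v}"] sM by simp
  have "h (s x) = (\<Sum>v\<in>range s. h v * indicator (s -` {v}) x)" for x
  proof -
    have "(\<Sum>v\<in>range s. h v * indicator (s -` {v}) x) = (\<Sum>v\<in>range s. if v = s x then h v else 0)"
      by (intro sum.cong refl) (auto simp: indicator_def)
    also have "\<dots> = h (s x)" using fin by (simp add: sum.delta')
    finally show ?thesis by simp
  qed
  then have "(\<integral>x. h (s x) \<partial>M) = (\<integral>x. (\<Sum>v\<in>range s. h v * indicator (s -` {v}) x) \<partial>M)"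
    by simp
  also have "\<dots> = (\<Sum>v\<in>range s. (\<integral>x. h v * indicator (s -` {v}) x \<partial>M))"
    by (rule Bochner_Integration.integral_sum)
       (auto intro!: integrable_mult_right integrable_indicator simp: meas less_top[symmetric])
  also have "\<dots> = (\<Sum>v\<in>range s. h v * measure M (s -` {v}))"
    using sp by (simp add: meas)
  finally show ?thesis .
qed

lemma simple_integrable:
  fixes M :: "real measure" and s :: "real \<Rightarrow> real"
  assumes sM: "sets M = sets borel" and fM: "finite_measure M" and s: "simple_function borel s"
  shows "integrable M s"
proof -
  interpret finite_measure M by (rule fM)
  have "norm (s x) \<le> (\<Sum>v\<in>range s. \<bar>v\<bar>)" for x
    using member_le_sum[of "s x" "range s" abs] simple_functionD(1)[OF s] by simp
  moreover have "s \<in> borel_measurable M"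
    by (subst measurable_cong_sets[OF sM refl]) (rule borel_measurable_simple_function[OF s])
  ultimately show ?thesis by (intro integrable_const_bound[of s "\<Sum>v\<in>range s. \<bar>v\<bar>"]) auto
qed

text \<open>A level set of a simple function, with value \<open>v\<close> and masses \<open>p\<close>, \<open>q\<close>, \<open>\<nu>\<close> under \<open>P\<close>, \<open>Q\<close>,
  \<open>Nu\<close>: AM-GM gives \<open>v (q - p) \<le> l v\<^sup>2 p / 2 + (q - p)\<^sup>2 / (2 l p)\<close>, and
  \<open>(q - p)\<^sup>2 / p \<le> \<nu> - 2 q + p\<close> because \<open>q\<^sup>2 \<le> p \<nu>\<close>.\<close>

lemma level_set_bound:
  fixes v p q \<nu> l :: real
  assumes l: "l > 0" and p: "p \<ge> 0" and \<nu>: "\<nu> \<ge> 0" and cs: "q\<^sup>2 \<le> p * \<nu>"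
  shows "\<bar>v * (q - p)\<bar> \<le> l / 2 * (v\<^sup>2 * p) + (\<nu> - 2 * q + p) / (2 * l)"
proof -
  have "w * (q - p) \<le> l / 2 * (w\<^sup>2 * p) + (\<nu> - 2 * q + p) / (2 * l)" for w
  proof (cases "p = 0")
    case True
    then show ?thesis using cs l \<nu> by simp
  next
    case False
    then have pp: "p > 0" using p by simp
    have "0 \<le> (l * w * p - (q - p))\<^sup>2" by simp
    then have "2 * l * p * (w * (q - p)) \<le> l\<^sup>2 * w\<^sup>2 * p\<^sup>2 + (q - p)\<^sup>2"
      by (simp add: power2_eq_square algebra_simps)
    also have "\<dots> \<le> 2 * l * p * (l / 2 * (w\<^sup>2 * p) + (\<nu> - 2 * q + p) / (2 * l))"
      using cs l by (simp add: field_simps power2_eq_square)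
    finally show ?thesis using l pp by (simp add: mult_le_cancel_left_pos)
  qed
  from this[of v] this[of "-v"] show ?thesis by simp
qed

lemma simple_approximation:
  fixes f :: "real \<Rightarrow> real"
  assumes "f \<in> borel_measurable borel"
  obtains F where "\<And>i. simple_function borel (F i)" "\<And>x. (\<lambda>i. F i x) \<longlonglongrightarrow> f x"
    "\<And>i x. \<bar>F i x\<bar> \<le> 2 * \<bar>f x\<bar>"
  using borel_measurable_implies_sequence_metric[OF assms, of 0] by (auto simp: dist_real_def)

text \<open>Summed over partitions, the hypothesis bounds the \<open>\<chi>\<^sup>2\<close>-divergence of \<open>Q\<close> from \<open>P\<close>
  by \<open>Nu(\<real>) - 1\<close>.\<close>

locale chi_square_bounded =
  fixes P Q Nu :: "real measure"
  assumes sets_P [measurable_cong]: "sets P = sets borel"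
    and sets_Q [measurable_cong]: "sets Q = sets borel"
    and sets_Nu [measurable_cong]: "sets Nu = sets borel"
    and prob_P: "prob_space P" and prob_Q: "prob_space Q" and finite_Nu: "finite_measure Nu"
    and measure_sq_le: "\<And>A. A \<in> sets borel \<Longrightarrow> (measure Q A)\<^sup>2 \<le> measure P A * measure Nu A"
begin

lemma finite_P: "finite_measure P" and finite_Q: "finite_measure Q"
  using prob_P prob_Q by (simp_all add: prob_space_def)

lemma measure_Nu_UNIV_ge_1: "measure Nu UNIV \<ge> 1"
  using measure_sq_le[of UNIV] prob_space.prob_space[OF prob_P] prob_space.prob_space[OF prob_Q]
    sets_eq_imp_space_eq[OF sets_P] sets_eq_imp_space_eq[OF sets_Q] by simp

lemma simple_mean_diff_le:
  assumes s: "simple_function borel s" and l: "l > 0"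
  shows "\<bar>(\<integral>x. s x \<partial>Q) - (\<integral>x. s x \<partial>P)\<bar> \<le> l / 2 * (\<integral>x. (s x)\<^sup>2 \<partial>P) + (measure Nu UNIV - 1) / (2 * l)"
proof -
  define p where "p v = measure P (s -` {v})" for v
  define q where "q v = measure Q (s -` {v})" for v
  define \<nu> where "\<nu> v = measure Nu (s -` {v})" for v
  have meas: "s -` {v} \<in> sets borel" for v using simple_functionD(2)[OF s, of "{v}"] by simp
  note sum_P = simple_integral_eq_sum[OF sets_P finite_P s, folded p_def]
  note sum_Q = simple_integral_eq_sum[OF sets_Q finite_Q s, folded q_def]
  note sum_Nu = simple_integral_eq_sum[OF sets_Nu finite_Nu s, folded \<nu>_def]
  have total: "(\<Sum>v\<in>range s. p v) = 1" "(\<Sum>v\<in>range s. q v) = 1" "(\<Sum>v\<in>range s. \<nu> v) = measure Nu UNIV"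
    using sum_P[of "\<lambda>_. 1"] sum_Q[of "\<lambda>_. 1"] sum_Nu[of "\<lambda>_. 1"]
      prob_space.prob_space[OF prob_P] prob_space.prob_space[OF prob_Q]
      sets_eq_imp_space_eq[OF sets_P] sets_eq_imp_space_eq[OF sets_Q] sets_eq_imp_space_eq[OF sets_Nu]
    by simp_all
  have "\<bar>(\<integral>x. s x \<partial>Q) - (\<integral>x. s x \<partial>P)\<bar> = \<bar>\<Sum>v\<in>range s. v * (q v - p v)\<bar>"
    using sum_P[of "\<lambda>v. v"] sum_Q[of "\<lambda>v. v"] by (simp add: sum_subtractf algebra_simps)
  also have "\<dots> \<le> (\<Sum>v\<in>range s. \<bar>v * (q v - p v)\<bar>)" by (rule sum_abs)
  also have "\<dots> \<le> (\<Sum>v\<in>range s. l / 2 * (v\<^sup>2 * p v) + (\<nu> v - 2 * q v + p v) / (2 * l))"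
    using measure_sq_le[OF meas] by (intro sum_mono level_set_bound[OF l]) (simp_all add: p_def q_def \<nu>_def)
  also have "\<dots> = l / 2 * (\<Sum>v\<in>range s. v\<^sup>2 * p v)
      + ((\<Sum>v\<in>range s. \<nu> v) - 2 * (\<Sum>v\<in>range s. q v) + (\<Sum>v\<in>range s. p v)) / (2 * l)"
    by (simp add: sum.distrib sum_distrib_left sum_divide_distrib[symmetric] sum_subtractf)
  also have "\<dots> = l / 2 * (\<integral>x. (s x)\<^sup>2 \<partial>P) + (measure Nu UNIV - 1) / (2 * l)"
    unfolding total sum_P[of "\<lambda>v. v\<^sup>2"] by simp
  finally show ?thesis .
qed

lemma square_integrable_P:
  assumes f [measurable]: "f \<in> borel_measurable borel" and fin: "(\<integral>\<^sup>+x. ennreal ((f x)\<^sup>2) \<partial>P) < \<infinity>"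
  shows "integrable P (\<lambda>x. (f x)\<^sup>2)" and "integrable P f"
proof -
  show sq: "integrable P (\<lambda>x. (f x)\<^sup>2)"
    unfolding integrable_iff_bounded using fin by simp
  show "integrable P f"
    by (rule finite_measure.square_integrable_imp_integrable[OF finite_P _ sq]) simp
qed

lemma simple_sq_integral_le:
  assumes f [measurable]: "f \<in> borel_measurable borel" and fin: "(\<integral>\<^sup>+x. ennreal ((f x)\<^sup>2) \<partial>P) < \<infinity>"
    and F: "simple_function borel F" "\<And>x. \<bar>F x\<bar> \<le> 2 * \<bar>f x\<bar>"
  shows "(\<integral>x. (F x)\<^sup>2 \<partial>P) \<le> 4 * (\<integral>x. (f x)\<^sup>2 \<partial>P)"
proof -
  have "(\<integral>x. (F x)\<^sup>2 \<partial>P) \<le> (\<integral>x. 4 * (f x)\<^sup>2 \<partial>P)"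
  proof (rule integral_mono)
    show "integrable P (\<lambda>x. (F x)\<^sup>2)"
      by (rule simple_integrable[OF sets_P finite_P simple_function_compose1[OF F(1)]])
    show "integrable P (\<lambda>x. 4 * (f x)\<^sup>2)" using square_integrable_P[OF f fin] by simp
    show "(F x)\<^sup>2 \<le> 4 * (f x)\<^sup>2" for x
      using power_mono[OF F(2)[of x], of 2] by (simp add: power_mult_distrib)
  qed
  then show ?thesis by simp
qed

lemma integrable_Q:
  assumes f [measurable]: "f \<in> borel_measurable borel" and fin: "(\<integral>\<^sup>+x. ennreal ((f x)\<^sup>2) \<partial>P) < \<infinity>"
  shows "integrable Q f"
proof -
  obtain F where F: "\<And>i. simple_function borel (F i)" "\<And>x. (\<lambda>i. F i x) \<longlonglongrightarrow> f x"
    "\<And>i x. \<bar>F i x\<bar> \<le> 2 * \<bar>f x\<bar>"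
    using simple_approximation[OF f] by blast
  have [measurable]: "F i \<in> borel_measurable borel" for i
    by (rule borel_measurable_simple_function[OF F(1)])
  define B where "B = 2 * (\<integral>x. \<bar>f x\<bar> \<partial>P) + 2 * (\<integral>x. (f x)\<^sup>2 \<partial>P) + (measure Nu UNIV - 1) / 2"
  have bound: "(\<integral>\<^sup>+x. ennreal \<bar>F i x\<bar> \<partial>Q) \<le> ennreal B" for i
  proof -
    have absF: "simple_function borel (\<lambda>x. \<bar>F i x\<bar>)" by (rule simple_function_compose1[OF F(1)])
    have "(\<integral>x. \<bar>F i x\<bar> \<partial>Q) \<le> (\<integral>x. \<bar>F i x\<bar> \<partial>P) + 1 / 2 * (\<integral>x. (F i x)\<^sup>2 \<partial>P) + (measure Nu UNIV - 1) / 2"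
      using simple_mean_diff_le[OF absF, of 1] by simp
    moreover have "(\<integral>x. \<bar>F i x\<bar> \<partial>P) \<le> (\<integral>x. 2 * \<bar>f x\<bar> \<partial>P)"
      using square_integrable_P[OF f fin] F(3)
      by (intro integral_mono simple_integrable[OF sets_P finite_P absF]) auto
    moreover have "(\<integral>x. (F i x)\<^sup>2 \<partial>P) \<le> 4 * (\<integral>x. (f x)\<^sup>2 \<partial>P)"
      by (rule simple_sq_integral_le[OF f fin F(1) F(3)])
    ultimately have "(\<integral>x. \<bar>F i x\<bar> \<partial>Q) \<le> B" by (simp add: B_def)
    moreover have "(\<integral>\<^sup>+x. ennreal \<bar>F i x\<bar> \<partial>Q) = ennreal (\<integral>x. \<bar>F i x\<bar> \<partial>Q)"
      by (intro nn_integral_eq_integral simple_integrable[OF sets_Q finite_Q absF]) simp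
    ultimately show ?thesis by (simp add: ennreal_leI)
  qed
  have "(\<integral>\<^sup>+x. ennreal \<bar>f x\<bar> \<partial>Q) = (\<integral>\<^sup>+x. liminf (\<lambda>i. ennreal \<bar>F i x\<bar>) \<partial>Q)"
  proof -
    have "liminf (\<lambda>i. ennreal \<bar>F i x\<bar>) = ennreal \<bar>f x\<bar>" for x
      by (intro lim_imp_Liminf tendsto_ennrealI tendsto_rabs F(2)) simp
    then show ?thesis by simp
  qed
  also have "\<dots> \<le> liminf (\<lambda>i. \<integral>\<^sup>+x. ennreal \<bar>F i x\<bar> \<partial>Q)"
    by (rule nn_integral_liminf) measurable
  also have "\<dots> \<le> limsup (\<lambda>i. \<integral>\<^sup>+x. ennreal \<bar>F i x\<bar> \<partial>Q)"
    by (rule Liminf_le_Limsup) simp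
  also have "\<dots> \<le> ennreal B"
    by (rule Limsup_bounded) (use bound in auto)
  finally have "(\<integral>\<^sup>+x. ennreal \<bar>f x\<bar> \<partial>Q) < \<infinity>"
    using ennreal_less_top[of B] by (simp add: le_less_trans)
  moreover have "f \<in> borel_measurable Q" by measurable
  ultimately show ?thesis by (intro integrableI_bounded) simp_all
qed

lemma mean_diff_le:
  assumes f [measurable]: "f \<in> borel_measurable borel" and fin: "(\<integral>\<^sup>+x. ennreal ((f x)\<^sup>2) \<partial>P) < \<infinity>"
    and l: "l > 0"
  shows "\<bar>(\<integral>x. f x \<partial>Q) - (\<integral>x. f x \<partial>P)\<bar> \<le> l / 2 * (\<integral>x. (f x)\<^sup>2 \<partial>P) + (measure Nu UNIV - 1) / (2 * l)"
proof -
  obtain F where F: "\<And>i. simple_function borel (F i)" "\<And>x. (\<lambda>i. F i x) \<longlonglongrightarrow> f x"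
    "\<And>i x. \<bar>F i x\<bar> \<le> 2 * \<bar>f x\<bar>"
    using simple_approximation[OF f] by blast
  have [measurable]: "F i \<in> borel_measurable borel" for i
    by (rule borel_measurable_simple_function[OF F(1)])
  note iP = square_integrable_P[OF f fin] and iQ = integrable_Q[OF f fin]
  have cQ: "(\<lambda>i. \<integral>x. F i x \<partial>Q) \<longlonglongrightarrow> (\<integral>x. f x \<partial>Q)"
    using iQ F(2,3) by (intro integral_dominated_convergence[where w = "\<lambda>x. 2 * \<bar>f x\<bar>"]) auto
  have cP: "(\<lambda>i. \<integral>x. F i x \<partial>P) \<longlonglongrightarrow> (\<integral>x. f x \<partial>P)"
    using iP F(2,3) by (intro integral_dominated_convergence[where w = "\<lambda>x. 2 * \<bar>f x\<bar>"]) auto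
  have cP2: "(\<lambda>i. \<integral>x. (F i x)\<^sup>2 \<partial>P) \<longlonglongrightarrow> (\<integral>x. (f x)\<^sup>2 \<partial>P)"
  proof (rule integral_dominated_convergence[where w = "\<lambda>x. 4 * (f x)\<^sup>2"])
    show "AE x in P. norm ((F i x)\<^sup>2) \<le> 4 * (f x)\<^sup>2" for i
    proof (rule AE_I2)
      fix x
      show "norm ((F i x)\<^sup>2) \<le> 4 * (f x)\<^sup>2"
        using power_mono[OF F(3)[of i x], of 2] by (simp add: power_mult_distrib)
    qed
  qed (use iP in \<open>auto intro!: AE_I2 tendsto_power F(2)\<close>)
  show ?thesis
  proof (rule LIMSEQ_le)
    show "(\<lambda>i. \<bar>(\<integral>x. F i x \<partial>Q) - (\<integral>x. F i x \<partial>P)\<bar>) \<longlonglongrightarrow> \<bar>(\<integral>x. f x \<partial>Q) - (\<integral>x. f x \<partial>P)\<bar>"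
      by (intro tendsto_rabs tendsto_diff cQ cP)
    show "(\<lambda>i. l / 2 * (\<integral>x. (F i x)\<^sup>2 \<partial>P) + (measure Nu UNIV - 1) / (2 * l))
        \<longlonglongrightarrow> l / 2 * (\<integral>x. (f x)\<^sup>2 \<partial>P) + (measure Nu UNIV - 1) / (2 * l)"
      by (intro tendsto_add tendsto_mult tendsto_const cP2)
  qed (use simple_mean_diff_le[OF F(1) l] in blast)
qed

theorem hammersley_chapman_robbins:
  assumes f: "f \<in> borel_measurable borel" and fin: "(\<integral>\<^sup>+x. ennreal ((f x)\<^sup>2) \<partial>P) < \<infinity>"
  shows "((\<integral>x. f x \<partial>Q) - (\<integral>x. f x \<partial>P))\<^sup>2 \<le> (\<integral>x. (f x)\<^sup>2 \<partial>P) * (measure Nu UNIV - 1)"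
proof -
  define c where "c = \<bar>(\<integral>x. f x \<partial>Q) - (\<integral>x. f x \<partial>P)\<bar>"
  define V where "V = (\<integral>x. (f x)\<^sup>2 \<partial>P)"
  define D where "D = measure Nu UNIV - 1"
  have "0 \<le> D + 2 * t * (- c) + t\<^sup>2 * V" for t
  proof (cases "t > 0")
    case True
    have "c \<le> t / 2 * V + D / (2 * t)"
      using mean_diff_le[OF f fin True] by (simp add: c_def V_def D_def)
    then have "2 * t * c \<le> t\<^sup>2 * V + D"
      using True by (simp add: field_simps power2_eq_square)
    then show ?thesis by simp
  next
    case False
    have "0 \<le> (- t) * c" using False by (intro mult_nonneg_nonneg) (simp_all add: c_def)
    moreover have "0 \<le> t\<^sup>2 * V" by (simp add: V_def)
    ultimately show ?thesis using measure_Nu_UNIV_ge_1 by (simp add: D_def)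
  qed
  then have "(- c)\<^sup>2 \<le> D * V" by (rule nonneg_quadratic_discriminant)
  then show ?thesis by (simp add: c_def V_def D_def mult.commute)
qed

end

locale state_pair =
  fixes d :: nat and \<rho>0 \<rho>1 :: "complex mat"
  assumes density0: "density_op d \<rho>0" and pd0: "pd_op d \<rho>0" and density1: "density_op d \<rho>1"
begin

definition S :: "complex mat" where "S = minv \<rho>0"

definition K :: real where "K = Re (mtrace (\<rho>1 * S * \<rho>1))"

lemma psd0: "psd_op d \<rho>0" and psd1: "psd_op d \<rho>1" and trace0: "mtrace \<rho>0 = 1" and trace1: "mtrace \<rho>1 = 1"
  using density0 density1 by (simp_all add: density_op_def)

lemma carrier0: "\<rho>0 \<in> carrier_mat d d" and carrier1: "\<rho>1 \<in> carrier_mat d d"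
  using psd0 psd1 by (simp_all add: psd_op_carrier)

lemma S_carrier: "S \<in> carrier_mat d d" and S_left_inverse: "S * \<rho>0 = 1\<^sub>m d"
  and S_right_inverse: "\<rho>0 * S = 1\<^sub>m d"
  using minv_pd_op[OF pd0] by (simp_all add: S_def)

lemma S_hermitian: "mat_adjoint S = S"
  by (rule mat_adjoint_inverse_hermitian[OF carrier0 S_carrier psd_op_hermitian[OF psd0]
        S_right_inverse S_left_inverse])

lemma psd_S: "psd_op d S"
proof -
  have "mat_adjoint S * \<rho>0 * S = S"
    using S_carrier carrier0 by (simp add: S_hermitian S_left_inverse)
  then show ?thesis using psd_op_congruence[OF psd0 S_carrier] by simp
qed

lemma psd_sandwich: "psd_op d (\<rho>1 * S * \<rho>1)"
  using psd_op_congruence[OF psd_S carrier1] psd_op_hermitian[OF psd1] by simp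

lemma mtrace_sandwich: "mtrace (\<rho>1 * S * \<rho>1) = complex_of_real K"
  unfolding K_def
  using mtrace_hermitian_real[OF psd_op_carrier psd_op_hermitian, OF psd_sandwich psd_sandwich] .

text \<open>Cauchy--Schwarz with \<open>M = 1\<close>: \<open>(Tr \<rho>1)\<^sup>2 \<le> Tr \<rho>0 \<cdot> K\<close>.\<close>

lemma K_ge_1: "K \<ge> 1"
proof -
  have "psd_op d (1\<^sub>m d)" using psd_op_gram[of "1\<^sub>m d" d d] by simp
  from mtrace_cauchy_schwarz[OF psd0 S_carrier S_hermitian S_left_inverse S_right_inverse carrier1
      psd_op_hermitian[OF psd1] this]
  show ?thesis
    using carrier0 carrier1 S_carrier by (simp add: trace0 trace1 K_def assoc_mult_mat[of _ d d _ d _ d])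
qed

lemma tensor_pow_S_inverse:
  "tensor_pow S n * tensor_pow \<rho>0 n = 1\<^sub>m (d ^ n)" "tensor_pow \<rho>0 n * tensor_pow S n = 1\<^sub>m (d ^ n)"
  using S_carrier carrier0
  by (simp_all add: tensor_pow_mult[symmetric] S_left_inverse S_right_inverse tensor_pow_one)

lemma tensor_pow_sandwich:
  "tensor_pow \<rho>1 n * tensor_pow S n * tensor_pow \<rho>1 n = tensor_pow (\<rho>1 * S * \<rho>1) n"
proof -
  have "tensor_pow (\<rho>1 * S * \<rho>1) n = tensor_pow (\<rho>1 * S) n * tensor_pow \<rho>1 n"
    by (rule tensor_pow_mult) (use S_carrier carrier1 in auto)
  also have "tensor_pow (\<rho>1 * S) n = tensor_pow \<rho>1 n * tensor_pow S n"
    by (rule tensor_pow_mult[OF carrier1 S_carrier])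
  finally show ?thesis by (rule sym)
qed

lemma chi_square_bounded_tensor_pow:
  assumes M: "is_povm (d ^ n) M"
  shows "chi_square_bounded (outcome_dist (tensor_pow \<rho>0 n) M) (outcome_dist (tensor_pow \<rho>1 n) M)
      (outcome_dist (tensor_pow (\<rho>1 * S * \<rho>1) n) M)" (is ?bounded)
    and "measure (outcome_dist (tensor_pow (\<rho>1 * S * \<rho>1) n) M) UNIV = K ^ n" (is ?total)
proof -
  define N where "N = d ^ n"
  define \<sigma> where "\<sigma> = tensor_pow \<rho>0 n"
  define \<tau> where "\<tau> = tensor_pow \<rho>1 n"
  define S' where "S' = tensor_pow S n"
  have \<sigma>: "psd_op N \<sigma>" "mtrace \<sigma> = 1" and \<tau>: "psd_op N \<tau>" "mtrace \<tau> = 1"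
    using psd_op_tensor_pow[OF psd0] psd_op_tensor_pow[OF psd1] carrier0 carrier1
    by (simp_all add: N_def \<sigma>_def \<tau>_def mtrace_tensor_pow trace0 trace1)
  have S': "S' \<in> carrier_mat N N" "mat_adjoint S' = S'" "S' * \<sigma> = 1\<^sub>m N" "\<sigma> * S' = 1\<^sub>m N"
    using S_carrier tensor_pow_S_inverse
    by (simp_all add: N_def \<sigma>_def S'_def tensor_pow_adjoint[symmetric] S_hermitian)
  have sandwich: "tensor_pow (\<rho>1 * S * \<rho>1) n = \<tau> * S' * \<tau>"
    by (simp add: \<tau>_def S'_def tensor_pow_sandwich)
  have psd_sandwich_n: "psd_op N (\<tau> * S' * \<tau>)"
    and trace_sandwich_n: "mtrace (\<tau> * S' * \<tau>) = complex_of_real (K ^ n)"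
    unfolding N_def sandwich[symmetric]
    using psd_op_tensor_pow[OF psd_sandwich] mtrace_tensor_pow[OF psd_op_carrier[OF psd_sandwich]]
    by (simp_all add: mtrace_sandwich)
  have MN: "is_povm N M" using M by (simp add: N_def)
  show ?bounded
    unfolding \<sigma>_def[symmetric] \<tau>_def[symmetric] sandwich
  proof (rule chi_square_bounded.intro)
    show "prob_space (outcome_dist \<sigma> M)" "prob_space (outcome_dist \<tau> M)"
      by (intro prob_space_outcome_dist[OF _ MN] \<sigma> \<tau>)+
    show "finite_measure (outcome_dist (\<tau> * S' * \<tau>) M)"
      by (rule finite_measure_outcome_dist[OF psd_sandwich_n MN])
    show "(measure (outcome_dist \<tau> M) A)\<^sup>2
        \<le> measure (outcome_dist \<sigma> M) A * measure (outcome_dist (\<tau> * S' * \<tau>) M) A"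
      if "A \<in> sets borel" for A
      using mtrace_cauchy_schwarz[OF \<sigma>(1) S' psd_op_carrier[OF \<tau>(1)] psd_op_hermitian[OF \<tau>(1)]
          povm_psd_op[OF MN that]]
      by (simp add: measure_outcome_dist[OF _ MN that] \<sigma> \<tau> psd_sandwich_n)
  qed simp_all
  have "M UNIV = 1\<^sub>m N" using MN by (simp add: is_povm_def)
  then show ?total
    unfolding sandwich
    using measure_outcome_dist[OF psd_sandwich_n MN, of UNIV]
      right_mult_one_mat[OF psd_op_carrier[OF psd_sandwich_n]]
    by (simp add: trace_sandwich_n)
qed

lemma mse_lower_bound:
  fixes M :: "real set \<Rightarrow> complex mat" and a0 a1 c :: real
  assumes M: "is_povm (d ^ n) M" and c: "c > 0" and a: "3 * c \<le> \<bar>a1 - a0\<bar>"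
    and b0: "\<bar>\<integral>\<gamma>. (\<gamma> - a0) \<partial>outcome_dist (tensor_pow \<rho>0 n) M\<bar> \<le> c"
    and b1: "\<bar>\<integral>\<gamma>. (\<gamma> - a1) \<partial>outcome_dist (tensor_pow \<rho>1 n) M\<bar> \<le> c"
  shows "ennreal (c\<^sup>2 / K ^ n) \<le> (\<integral>\<^sup>+\<gamma>. ennreal ((\<gamma> - a0)\<^sup>2) \<partial>outcome_dist (tensor_pow \<rho>0 n) M)"
proof -
  define P where "P = outcome_dist (tensor_pow \<rho>0 n) M"
  define Q where "Q = outcome_dist (tensor_pow \<rho>1 n) M"
  define Nu where "Nu = outcome_dist (tensor_pow (\<rho>1 * S * \<rho>1) n) M"
  interpret chi_square_bounded P Q Nu
    unfolding P_def Q_def Nu_def by (rule chi_square_bounded_tensor_pow[OF M])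
  define f where "f \<gamma> = \<gamma> - a0" for \<gamma> :: real
  have f: "f \<in> borel_measurable borel" unfolding f_def by measurable
  show ?thesis
  proof (cases "(\<integral>\<^sup>+\<gamma>. ennreal ((f \<gamma>)\<^sup>2) \<partial>P) < \<infinity>")
    case False
    then show ?thesis by (simp add: not_less top_unique f_def P_def)
  next
    case True
    define V where "V = (\<integral>x. (f x)\<^sup>2 \<partial>P)"
    have "(\<integral>\<gamma>. (\<gamma> - a1) \<partial>Q) = (\<integral>x. f x - (a1 - a0) \<partial>Q)"
      by (simp add: f_def algebra_simps)
    also have "\<dots> = (\<integral>x. f x \<partial>Q) - (\<integral>x. a1 - a0 \<partial>Q)"
      using integrable_Q[OF f True] finite_measure.integrable_const[OF finite_Q]
      by (rule Bochner_Integration.integral_diff)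
    also have "(\<integral>x. a1 - a0 \<partial>Q) = a1 - a0"
      using prob_space.prob_space[OF prob_Q] by simp
    finally have "c \<le> \<bar>(\<integral>x. f x \<partial>Q) - (\<integral>x. f x \<partial>P)\<bar>"
      using a b0 b1 by (simp add: f_def P_def Q_def)
    then have "c\<^sup>2 \<le> ((\<integral>x. f x \<partial>Q) - (\<integral>x. f x \<partial>P))\<^sup>2"
      using c by (metis abs_ge_zero less_le_trans power2_abs power_mono less_imp_le)
    also have "\<dots> \<le> V * (K ^ n - 1)"
      using hammersley_chapman_robbins[OF f True] chi_square_bounded_tensor_pow(2)[OF M]
      by (simp add: V_def Nu_def)
    also have "\<dots> \<le> V * K ^ n"
      unfolding V_def by (intro mult_left_mono integral_nonneg_AE) simp_all
    finally have "c\<^sup>2 / K ^ n \<le> V"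
      using K_ge_1 by (simp add: divide_le_eq)
    moreover have "(\<integral>\<^sup>+\<gamma>. ennreal ((f \<gamma>)\<^sup>2) \<partial>P) = ennreal V"
      unfolding V_def by (intro nn_integral_eq_integral square_integrable_P[OF f True]) simp
    ultimately show ?thesis by (simp add: f_def P_def ennreal_leI)
  qed
qed


lemma mtrace_difference_sandwich:
  "mtrace ((\<rho>1 - \<rho>0) * ((\<rho>1 - \<rho>0) * S)) = mtrace (\<rho>1 * S * \<rho>1) - 1"
proof -
  define D where "D = \<rho>1 - \<rho>0"
  note c = carrier0 carrier1 S_carrier
  have Dc: "D \<in> carrier_mat d d" unfolding D_def by (rule minus_carrier_mat[OF carrier0])
  have "D * S = \<rho>1 * S - 1\<^sub>m d"
    unfolding D_def using c by (simp add: minus_mult_distrib_mat[of _ d d _ _ d] S_right_inverse)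
  then have "D * (D * S) = D * (\<rho>1 * S) - D"
    using c Dc by (simp add: mult_minus_distrib_mat[of _ d d _ d])
  then have "mtrace (D * (D * S)) = mtrace (D * (\<rho>1 * S)) - mtrace D"
    using c Dc by (simp add: mtrace_minus[of _ d])
  also have "D * (\<rho>1 * S) = \<rho>1 * (\<rho>1 * S) - \<rho>0 * (\<rho>1 * S)"
    unfolding D_def using c by (simp add: minus_mult_distrib_mat[of _ d d _ _ d])
  also have "mtrace (\<rho>1 * (\<rho>1 * S) - \<rho>0 * (\<rho>1 * S)) = mtrace (\<rho>1 * (\<rho>1 * S)) - mtrace (\<rho>0 * (\<rho>1 * S))"
    using c by (simp add: mtrace_minus[of _ d])
  also have "mtrace (\<rho>1 * (\<rho>1 * S)) = mtrace (\<rho>1 * S * \<rho>1)"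
    using c by (simp add: mtrace_mult_comm[of \<rho>1 d d])
  also have "mtrace (\<rho>0 * (\<rho>1 * S)) = mtrace (\<rho>1 * S * \<rho>0)"
    using c by (simp add: mtrace_mult_comm[of \<rho>0 d d])
  also have "\<rho>1 * S * \<rho>0 = \<rho>1" using c by (simp add: assoc_mult_mat[of _ d d _ d _ d] S_left_inverse)
  also have "mtrace D = 0" using c by (simp add: D_def mtrace_minus[of _ d] trace0 trace1)
  finally show ?thesis by (simp add: trace1 D_def)
qed

lemma one_plus_delta_sq_JR1:
  fixes \<rho> :: "real \<Rightarrow> complex mat" and \<theta> \<delta> :: real
  assumes \<rho>: "\<rho> \<theta> = \<rho>0" "\<rho> (\<theta> + \<delta>) = \<rho>1" and \<delta>: "\<delta> \<noteq> 0"
  shows "1 + \<delta>\<^sup>2 * Re (JR1 \<rho> \<theta> \<delta>) = K"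
proof -
  define k where "k = complex_of_real (1 / \<delta>)"
  define D where "D = \<rho>1 - \<rho>0"
  note c = carrier0 carrier1 S_carrier
  have Dc: "D \<in> carrier_mat d d" unfolding D_def by (rule minus_carrier_mat[OF carrier0])
  have adjL: "mat_adjoint (k \<cdot>\<^sub>m (S * D)) = k \<cdot>\<^sub>m (D * S)"
    using c Dc psd_op_hermitian[OF psd0] psd_op_hermitian[OF psd1]
    by (simp add: mat_adjoint_smult mat_adjoint_mult[of _ d d _ d] mat_adjoint_minus[of _ d d] S_hermitian
        D_def k_def)
  have "\<rho>0 * (k \<cdot>\<^sub>m (S * D)) = k \<cdot>\<^sub>m (\<rho>0 * (S * D))"
    by (rule mult_smult_distrib) (use c Dc in auto)
  also have "\<rho>0 * (S * D) = D"
    using c Dc by (simp add: assoc_mult_mat[of _ d d _ d _ d, symmetric] S_right_inverse)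
  finally have "\<rho>0 * (k \<cdot>\<^sub>m (S * D)) * mat_adjoint (k \<cdot>\<^sub>m (S * D)) = k \<cdot>\<^sub>m D * (k \<cdot>\<^sub>m (D * S))"
    unfolding adjL by simp
  also have "\<dots> = k \<cdot>\<^sub>m (D * (k \<cdot>\<^sub>m (D * S)))"
    by (rule mult_smult_assoc_mat) (use c Dc in auto)
  also have "D * (k \<cdot>\<^sub>m (D * S)) = k \<cdot>\<^sub>m (D * (D * S))"
    by (rule mult_smult_distrib) (use c Dc in auto)
  finally have "JR1 \<rho> \<theta> \<delta> = k * k * (mtrace (\<rho>1 * S * \<rho>1) - 1)"
    unfolding JR1_def LR1_def \<rho> S_def[symmetric] k_def[symmetric] D_def[symmetric]
    using c Dc mtrace_difference_sandwich by (simp add: mtrace_smult[of _ d] D_def)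
  then show ?thesis
    using \<delta> by (simp add: k_def mtrace_sandwich power2_eq_square)
qed

end

lemma ln_ennreal_ge:
  assumes "x > 0" "ennreal x \<le> m"
  shows "ereal (ln x) \<le> ln_ennreal m"
proof (cases "m = \<top>")
  case False
  then have "m = ennreal (enn2real m)" "x \<le> enn2real m"
    using assms enn2real_mono[OF assms(2)] by (simp_all add: ennreal_enn2real_if less_top)
  then show ?thesis using assms by (auto simp: ln_ennreal_def)
qed (simp add: ln_ennreal_def)

lemma liminf_normalized_ln_ge:
  fixes m :: "nat \<Rightarrow> ennreal" and c K :: real
  assumes c: "c > 0" and K: "K > 0" and bound: "\<And>n. n \<ge> N \<Longrightarrow> ennreal (c / K ^ n) \<le> m n"
  shows "ereal (- ln K) \<le> liminf (\<lambda>n. ereal (1 / real n) * ln_ennreal (m n))"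
proof -
  define n1 where "n1 = max N 1"
  have step: "ereal (ln c / real n - ln K) \<le> ereal (1 / real n) * ln_ennreal (m n)" if n: "n \<ge> n1" for n
  proof -
    have "ln (c / K ^ n) = ln c - real n * ln K" using c K by (simp add: ln_div ln_realpow)
    then have "ln c / real n - ln K = 1 / real n * ln (c / K ^ n)" using n by (simp add: n1_def field_simps)
    then have "ereal (ln c / real n - ln K) = ereal (1 / real n) * ereal (ln (c / K ^ n))" by simp
    also have "\<dots> \<le> ereal (1 / real n) * ln_ennreal (m n)"
      by (rule ereal_mult_left_mono[OF ln_ennreal_ge]) (use c K n bound in \<open>simp_all add: n1_def\<close>)
    finally show ?thesis .
  qed
  have "(\<lambda>n. ereal (ln c / real n - ln K)) \<longlonglongrightarrow> ereal (0 - ln K)"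
    by (intro tendsto_ereal tendsto_diff lim_const_over_n tendsto_const)
  then have "liminf (\<lambda>n. ereal (ln c / real n - ln K)) = ereal (0 - ln K)"
    by (rule lim_imp_Liminf[OF trivial_limit_sequentially])
  moreover have "liminf (\<lambda>n. ereal (ln c / real n - ln K))
      \<le> liminf (\<lambda>n. ereal (1 / real n) * ln_ennreal (m n))"
    by (rule Liminf_mono) (use step in \<open>auto simp: eventually_sequentially\<close>)
  ultimately show ?thesis by simp
qed

theorem theorem3:
  fixes d :: nat and \<Theta> :: "real set" and \<rho> :: "real \<Rightarrow> complex mat"
    and g :: "real \<Rightarrow> real" and \<theta> \<delta> :: real
    and M :: "nat \<Rightarrow> real set \<Rightarrow> complex mat"
  assumes model: "\<forall>t \<in> \<Theta>. density_op d (\<rho> t) \<and> pd_op d (\<rho> t)"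
    and th: "\<theta> \<in> \<Theta>" and thd: "\<theta> + \<delta> \<in> \<Theta>" and dnz: "\<delta> \<noteq> 0"
    and gap: "\<forall>t \<in> \<Theta>. \<not> (min \<theta> (\<theta> + \<delta>) < t \<and> t < max \<theta> (\<theta> + \<delta>))"
    and gne: "g \<theta> \<noteq> g (\<theta> + \<delta>)"
    and povm: "\<forall>n \<ge> 1. is_povm (d ^ n) (M n)"
    and bias: "\<exists>n0. \<forall>n \<ge> n0.
        \<bar>bias \<rho> g n (M n) \<theta>\<bar> / \<bar>\<delta>\<bar> \<le> \<bar>diff1 g \<delta> \<theta>\<bar> / 3 \<and>
        \<bar>bias \<rho> g n (M n) (\<theta> + \<delta>)\<bar> / \<bar>\<delta>\<bar> \<le> \<bar>diff1 g \<delta> \<theta>\<bar> / 3"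
  shows "liminf (\<lambda>n. ereal (1 / real n) * ln_ennreal (mse \<rho> g n (M n) \<theta>))
           \<ge> ereal (- ln (1 + \<delta>\<^sup>2 * Re (JR1 \<rho> \<theta> \<delta>)))"
proof -
  interpret state_pair d "\<rho> \<theta>" "\<rho> (\<theta> + \<delta>)"
    using model th thd by unfold_locales auto
  obtain n0 where n0: "\<forall>n \<ge> n0. \<bar>bias \<rho> g n (M n) \<theta>\<bar> / \<bar>\<delta>\<bar> \<le> \<bar>diff1 g \<delta> \<theta>\<bar> / 3 \<and>
      \<bar>bias \<rho> g n (M n) (\<theta> + \<delta>)\<bar> / \<bar>\<delta>\<bar> \<le> \<bar>diff1 g \<delta> \<theta>\<bar> / 3"
    using bias by blast
  define c where "c = \<bar>g (\<theta> + \<delta>) - g \<theta>\<bar> / 3"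
  have c: "c > 0" using gne by (simp add: c_def)
  have "\<bar>diff1 g \<delta> \<theta>\<bar> / 3 = c / \<bar>\<delta>\<bar>"
    by (simp add: c_def diff1_def abs_divide)
  then have bias_le: "\<bar>b\<bar> \<le> c" if "\<bar>b\<bar> / \<bar>\<delta>\<bar> \<le> \<bar>diff1 g \<delta> \<theta>\<bar> / 3" for b
    using that dnz by (simp add: divide_le_cancel)
  have "ennreal (c\<^sup>2 / K ^ n) \<le> mse \<rho> g n (M n) \<theta>" if n: "n \<ge> max n0 1" for n
  proof -
    have "\<bar>bias \<rho> g n (M n) \<theta>\<bar> \<le> c" "\<bar>bias \<rho> g n (M n) (\<theta> + \<delta>)\<bar> \<le> c"
      using n n0 bias_le by auto
    moreover have "is_povm (d ^ n) (M n)" using n povm by simp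
    moreover have "3 * c \<le> \<bar>g (\<theta> + \<delta>) - g \<theta>\<bar>" by (simp add: c_def)
    ultimately show ?thesis
      unfolding mse_def bias_def by (intro mse_lower_bound c)
  qed
  then have "ereal (- ln K) \<le> liminf (\<lambda>n. ereal (1 / real n) * ln_ennreal (mse \<rho> g n (M n) \<theta>))"
    using c K_ge_1 by (intro liminf_normalized_ln_ge[where c = "c\<^sup>2" and N = "max n0 1"]) simp_all
  then show ?thesis using one_plus_delta_sq_JR1[OF refl refl dnz] by simp
qed

end
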